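(* In the ladder model, the density of the stationary distribution of the Markov chain $(\Delta_n)_{n\ge0}$ is $$\rho_\infty(d)=\frac{1}{2\,\mathrm{J}_2(2)}\,e^{-\frac32|d|}\,\mathrm{J}_1\!\left(2e^{-\frac12|d|}\right),\qquad d\in\mathbb{R},$$ where $\mathrm{J}_\nu$ denotes the Bessel function of the first kind of order $\nu$.
   Context: Ladder model $\mathcal{G}^{\{\mathcal{X},\mathcal{Y},\mathcal{Z}\}}$: for $n\ge0$, $G_n$ has vertex set $\{0,\dots,n\}\times\{0,1\}$ and edges: for $1\le i\le n$, an edge with weight $X_i$ joining $(i-1,0)$ and $(i,0)$, an edge with weight $Y_i$ joining $(i-1,1)$ and $(i,1)$; for $0\le i\le n$, an edge with weight $Z_i$ joining $(i,0)$ and $(i,1)$. All weights are independent standard exponential random variables. Path weight = sum of edge weights. $l_n$ ($l_n'$) is the minimal weight of a path in $G_n$ from $(0,0)$ to $(n,0)$ (to $(n,1)$), and $\Delta_n=l_n'-l_n$; $(\Delta_n)$ is a Markov chain given by $\Delta_0$ standard exponential and $\Delta_n=\min\{\Delta_{n-1}+Y_n,X_n+Z_n\}-\min\{X_n,\Delta_{n-1}+Y_n+Z_n\}$. *)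

theory Defs
  imports "HOL-Probability.Probability"
begin

definition bessel_J :: "nat \<Rightarrow> real \<Rightarrow> real" where
  "bessel_J n x = (\<Sum>k. (-1) ^ k / (fact k * fact (k + n)) * (x / 2) ^ (2 * k + n))"

definition std_exp :: "real measure" where
  "std_exp = density lborel (exponential_density 1)"

definition ladder_step :: "real \<Rightarrow> real \<Rightarrow> real \<Rightarrow> real \<Rightarrow> real" where
  "ladder_step d x y z = min (d + y) (x + z) - min x (d + y + z)"

definition ladder_transition :: "real measure \<Rightarrow> real measure" where
  "ladder_transition \<mu> =
     distr (\<mu> \<Otimes>\<^sub>M (std_exp \<Otimes>\<^sub>M (std_exp \<Otimes>\<^sub>M std_exp))) borel
       (\<lambda>(d, x, y, z). ladder_step d x y z)"

definition ladder_stationary :: "real measure \<Rightarrow> bool" where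
  "ladder_stationary \<mu> \<longleftrightarrow> prob_space \<mu> \<and> sets \<mu> = sets borel \<and> ladder_transition \<mu> = \<mu>"

definition rho_inf :: "real \<Rightarrow> real" where
  "rho_inf d = 1 / (2 * bessel_J 2 2) * exp (- (3/2) * \<bar>d\<bar>) * bessel_J 1 (2 * exp (- (1/2) * \<bar>d\<bar>))"

end

theory Submission
  imports Defs
begin

text \<open>
  One step of the chain clamps Delta + Y - X to [-Z, Z], so the cdf F of a stationary law
  satisfies F t = 1 - exp (- t) + exp (- t) * K t for t \<ge> 0 and F t = exp t * K t for
  t < 0, where K t = E F (t + X - Y) smooths F against the Laplace law of X - Y.
  Uniqueness: the difference h of two stationary cdfs satisfies
  abs (h t) \<le> exp (- abs t) * E abs (h (t + X - Y)), a strict contraction, hence h = 0.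
  Existence: rho_inf d = radial_rho (abs d), and radial_rho as well as its tail
  G u = (integral of radial_rho over [u, \<infinity>)) are series sum_k c_k exp (- (k + m) u)
  in the Bessel coefficients. All integrals in K t are then computed by termwise
  antiderivatives, and the fixed-point equation becomes an identity between such series.
  The sections develop: these exponential series, Bessel coefficients, the density and its
  tail, integration lemmas, explicit integrals, the candidate law, the exponential law,
  the one-step cdf formula, uniqueness, existence, and finally the main theorem.
\<close>

section \<open>Exponential series\<close>

definition entire_coeffs :: "(nat \<Rightarrow> real) \<Rightarrow> bool" where
  "entire_coeffs \<beta> \<longleftrightarrow> (\<forall>r\<ge>0. summable (\<lambda>k. \<bar>\<beta> k\<bar> * r ^ k))"

definition eseries :: "(nat \<Rightarrow> real) \<Rightarrow> nat \<Rightarrow> real \<Rightarrow> real" where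
  "eseries \<beta> m u = (\<Sum>k. \<beta> k * exp (- (real (k + m) * u)))"

lemma entire_coeffs_summable:
  "entire_coeffs \<beta> \<Longrightarrow> 0 \<le> r \<Longrightarrow> summable (\<lambda>k. \<bar>\<beta> k\<bar> * r ^ k)"
  unfolding entire_coeffs_def by blast

lemma entire_coeffs_linear_weight:
  assumes \<beta>: "entire_coeffs \<beta>" and c: "0 \<le> c"
  shows "entire_coeffs (\<lambda>k. (real k + c) * \<beta> k)"
  unfolding entire_coeffs_def
proof (intro allI impI)
  fix r :: real assume r: "0 \<le> r"
  show "summable (\<lambda>k. \<bar>(real k + c) * \<beta> k\<bar> * r ^ k)"
  proof (rule summable_comparison_test'[where N=0])
    show "summable (\<lambda>k. (c + 1) * (\<bar>\<beta> k\<bar> * (2 * r) ^ k))"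
      using entire_coeffs_summable[OF \<beta>, of "2 * r"] r by (intro summable_mult) simp
  next
    fix k :: nat
    have "real k + 1 \<le> 2 ^ k" by (induction k) simp_all
    moreover have "c \<le> c * 2 ^ k" using mult_left_mono[of 1 "2 ^ k" c] c by simp
    ultimately have "real k + c \<le> (c + 1) * 2 ^ k" by (simp add: algebra_simps)
    then have "(real k + c) * (\<bar>\<beta> k\<bar> * r ^ k) \<le> (c + 1) * 2 ^ k * (\<bar>\<beta> k\<bar> * r ^ k)"
      using r by (intro mult_right_mono) auto
    then show "norm (\<bar>(real k + c) * \<beta> k\<bar> * r ^ k) \<le> (c + 1) * (\<bar>\<beta> k\<bar> * (2 * r) ^ k)"
      using c r by (simp add: abs_mult power_mult_distrib mult_ac)
  qed
qed

lemma entire_coeffs_divide: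
  assumes \<beta>: "entire_coeffs \<beta>" and c: "0 < c"
  shows "entire_coeffs (\<lambda>k. \<beta> k / (real k + c))"
  unfolding entire_coeffs_def
proof (intro allI impI)
  fix r :: real assume r: "0 \<le> r"
  show "summable (\<lambda>k. \<bar>\<beta> k / (real k + c)\<bar> * r ^ k)"
  proof (rule summable_comparison_test'[where N=0])
    show "summable (\<lambda>k. (1 / c) * (\<bar>\<beta> k\<bar> * r ^ k))"
      using entire_coeffs_summable[OF \<beta> r] by (rule summable_mult)
  next
    fix k :: nat
    have "\<bar>\<beta> k\<bar> / (real k + c) \<le> \<bar>\<beta> k\<bar> / c" using c by (intro divide_left_mono) auto
    then have "\<bar>\<beta> k\<bar> / (real k + c) * r ^ k \<le> \<bar>\<beta> k\<bar> / c * r ^ k"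
      using r by (intro mult_right_mono) auto
    then show "norm (\<bar>\<beta> k / (real k + c)\<bar> * r ^ k) \<le> (1 / c) * (\<bar>\<beta> k\<bar> * r ^ k)"
      using c r by simp
  qed
qed

lemma entire_coeffs_cmult: "entire_coeffs \<beta> \<Longrightarrow> entire_coeffs (\<lambda>k. c * \<beta> k)"
  unfolding entire_coeffs_def by (auto simp: abs_mult mult.assoc intro: summable_mult)

lemma entire_coeffs_factorial_bound:
  assumes "\<And>k. \<bar>\<beta> k\<bar> \<le> 1 / fact k"
  shows "entire_coeffs \<beta>"
  unfolding entire_coeffs_def
proof (intro allI impI)
  fix r :: real assume r: "0 \<le> r"
  show "summable (\<lambda>k. \<bar>\<beta> k\<bar> * r ^ k)"
  proof (rule summable_comparison_test'[where N=0])
    show "summable (\<lambda>k. inverse (fact k) * r ^ k)" by (rule summable_exp)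
    show "norm (\<bar>\<beta> k\<bar> * r ^ k) \<le> inverse (fact k) * r ^ k" for k
      using assms[of k] r by (simp add: mult_right_mono divide_inverse)
  qed
qed

lemma entire_coeffs_shift:
  assumes \<beta>: "entire_coeffs \<beta>"
  shows "entire_coeffs (\<lambda>k. \<beta> (Suc k))"
  unfolding entire_coeffs_def
proof (intro allI impI)
  fix r :: real assume r: "0 \<le> r"
  show "summable (\<lambda>k. \<bar>\<beta> (Suc k)\<bar> * r ^ k)"
  proof (rule summable_comparison_test'[where N=0])
    show "summable (\<lambda>k. \<bar>\<beta> (Suc k)\<bar> * (r + 1) ^ Suc k)"
      using summable_ignore_initial_segment[OF entire_coeffs_summable[OF \<beta>, of "r + 1"], of 1] r
      by simp
    show "norm (\<bar>\<beta> (Suc k)\<bar> * r ^ k) \<le> \<bar>\<beta> (Suc k)\<bar> * (r + 1) ^ Suc k" for k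
    proof -
      have "r ^ k \<le> (r + 1) ^ k" using r by (intro power_mono) auto
      also have "\<dots> \<le> (r + 1) ^ Suc k" using r by simp
      finally show ?thesis using r by (simp add: mult_left_mono)
    qed
  qed
qed

lemma entire_coeffs_power_summable:
  assumes "entire_coeffs \<beta>"
  shows "summable (\<lambda>k. \<beta> k * x ^ k)"
proof (rule summable_rabs_cancel)
  show "summable (\<lambda>k. \<bar>\<beta> k * x ^ k\<bar>)"
    using entire_coeffs_summable[OF assms, of "\<bar>x\<bar>"] by (simp add: abs_mult power_abs)
qed

lemma exp_nat_mult: "exp (- (real k * u)) = exp (- u) ^ k"
  by (simp add: exp_of_nat_mult[symmetric])

lemma eseries_term_bound:
  assumes "v \<le> u"
  shows "\<bar>\<beta> k * exp (- (real (k + m) * u))\<bar> \<le> exp (- (real m * v)) * (\<bar>\<beta> k\<bar> * exp (- v) ^ k)"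
proof -
  have "exp (- (real (k + m) * u)) \<le> exp (- (real (k + m) * v))"
    using assms by (simp add: mult_left_mono)
  also have "\<dots> = exp (- (real m * v)) * exp (- v) ^ k"
    by (simp add: exp_nat_mult[symmetric] algebra_simps exp_add[symmetric])
  finally show ?thesis by (simp add: abs_mult mult_left_mono mult_ac)
qed

lemma eseries_summable_abs:
  assumes "entire_coeffs \<beta>"
  shows "summable (\<lambda>k. \<bar>\<beta> k * exp (- (real (k + m) * u))\<bar>)"
proof (rule summable_comparison_test'[where N=0])
  show "summable (\<lambda>k. exp (- (real m * u)) * (\<bar>\<beta> k\<bar> * exp (- u) ^ k))"
    using entire_coeffs_summable[OF assms] by (intro summable_mult) simp
  show "norm \<bar>\<beta> k * exp (- (real (k + m) * u))\<bar> \<le> exp (- (real m * u)) * (\<bar>\<beta> k\<bar> * exp (- u) ^ k)" for k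
    using eseries_term_bound[of u u] by simp
qed

lemma eseries_summable:
  assumes "entire_coeffs \<beta>"
  shows "summable (\<lambda>k. \<beta> k * exp (- (real (k + m) * u)))"
  by (rule summable_rabs_cancel[OF eseries_summable_abs[OF assms]])

lemma eseries_power_series:
  assumes "entire_coeffs \<beta>"
  shows "eseries \<beta> m u = exp (- (real m * u)) * (\<Sum>k. \<beta> k * exp (- u) ^ k)"
proof -
  have "(\<lambda>k. \<beta> k * exp (- (real (k + m) * u))) = (\<lambda>k. exp (- (real m * u)) * (\<beta> k * exp (- u) ^ k))"
    by (rule ext) (simp add: exp_nat_mult[symmetric] algebra_simps exp_add[symmetric])
  then show ?thesis
    unfolding eseries_def by (simp only: suminf_mult[OF entire_coeffs_power_summable[OF assms]])
qed

lemma eseries_cmult: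
  assumes "entire_coeffs \<beta>"
  shows "eseries (\<lambda>k. c * \<beta> k) m u = c * eseries \<beta> m u"
  unfolding eseries_def using suminf_mult[OF eseries_summable[OF assms, of m u], of c]
  by (simp add: mult.assoc)

lemma eseries_add:
  assumes "entire_coeffs \<beta>" "entire_coeffs \<gamma>"
  shows "eseries (\<lambda>k. \<beta> k + \<gamma> k) m u = eseries \<beta> m u + eseries \<gamma> m u"
  unfolding eseries_def distrib_right
  by (rule suminf_add[OF eseries_summable[OF assms(1)] eseries_summable[OF assms(2)], symmetric])

lemma eseries_shift:
  assumes "entire_coeffs \<beta>"
  shows "eseries \<beta> (Suc m) u = exp (- u) * eseries \<beta> m u"
  unfolding eseries_def using suminf_mult[OF eseries_summable[OF assms, of m u], of "exp (- u)"]
  by (simp add: algebra_simps exp_add[symmetric])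

lemma eseries_2: "entire_coeffs \<beta> \<Longrightarrow> eseries \<beta> 2 u = exp (- u) * eseries \<beta> 1 u"
  using eseries_shift[of \<beta> 1 u] by (simp add: numeral_2_eq_2)

lemma eseries_3: "entire_coeffs \<beta> \<Longrightarrow> eseries \<beta> 3 u = exp (- u) * eseries \<beta> 2 u"
  using eseries_shift[of \<beta> 2 u] by (simp add: numeral_3_eq_3)

lemma eseries_at_zero: "eseries \<beta> m 0 = (\<Sum>k. \<beta> k)"
  unfolding eseries_def by simp

lemma eseries_drop_head:
  assumes \<beta>: "entire_coeffs \<beta>"
  shows "exp (- u) * eseries (\<lambda>k. \<beta> (Suc k)) m u = eseries \<beta> m u - \<beta> 0 * exp (- (real m * u))"
proof -
  have "exp (- u) * eseries (\<lambda>k. \<beta> (Suc k)) m u = eseries (\<lambda>k. \<beta> (Suc k)) (Suc m) u"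
    by (rule eseries_shift[OF entire_coeffs_shift[OF \<beta>], symmetric])
  also have "\<dots> = (\<Sum>k. \<beta> (Suc k) * exp (- (real (Suc k + m) * u)))"
    unfolding eseries_def by (simp only: add_Suc add_Suc_right)
  also have "\<dots> = (\<Sum>k. \<beta> k * exp (- (real (k + m) * u))) - \<beta> 0 * exp (- (real (0 + m) * u))"
    by (rule suminf_split_head[OF eseries_summable[OF \<beta>]])
  also have "\<dots> = eseries \<beta> m u - \<beta> 0 * exp (- (real m * u))"
    unfolding eseries_def by simp
  finally show ?thesis .
qed

lemma eseries_has_derivative:
  assumes \<beta>: "entire_coeffs \<beta>"
  shows "(eseries \<beta> m has_real_derivative eseries (\<lambda>k. - real (k + m) * \<beta> k) m u) (at u)"
proof -
  let ?S = "{u - 1 <..< u + 1}"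
  let ?f = "\<lambda>k v. \<beta> k * exp (- (real (k + m) * v))"
  let ?f' = "\<lambda>k v. - real (k + m) * \<beta> k * exp (- (real (k + m) * v))"
  let ?M = "\<lambda>k. exp (- (real m * (u - 1))) * (\<bar>(real k + real m) * \<beta> k\<bar> * exp (- (u - 1)) ^ k)"
  have "((\<lambda>v. \<Sum>k. ?f k v) has_field_derivative (\<Sum>k. ?f' k u)) (at u)"
  proof (rule has_field_derivative_series'(2)[of ?S _ _ u])
    show "(?f k has_field_derivative ?f' k v) (at v within ?S)" for k v
      by (auto intro!: derivative_eq_intros)
    have "uniformly_convergent_on ?S (\<lambda>n v. \<Sum>k<n. ?f' k v)"
    proof (rule Weierstrass_m_test')
      show "norm (?f' k v) \<le> ?M k" if "v \<in> ?S" for k v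
        using eseries_term_bound[where \<beta> = "\<lambda>k. (real k + real m) * \<beta> k" and u = v and v = "u - 1"] that
        by (simp add: abs_mult ac_simps)
      show "summable ?M"
        using entire_coeffs_summable[OF entire_coeffs_linear_weight[OF \<beta>, of "real m"], of "exp (- (u - 1))"]
        by (intro summable_mult) simp
    qed
    then show "uniformly_convergent_on ?S (\<lambda>n v. \<Sum>k<n. ?f' k v)" .
  qed (use eseries_summable[OF \<beta>] in auto)
  then show ?thesis unfolding eseries_def[abs_def] by (simp add: mult.assoc)
qed

lemma eseries_antiderivative:
  assumes \<beta>: "entire_coeffs \<beta>" and m: "1 \<le> m"
  shows "(eseries (\<lambda>k. \<beta> k / real (k + m)) m has_real_derivative - eseries \<beta> m u) (at u)"
proof -
  have "entire_coeffs (\<lambda>k. \<beta> k / real (k + m))"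
    using entire_coeffs_divide[OF \<beta>, of "real m"] m by simp
  moreover have "(\<lambda>k. - real (k + m) * (\<beta> k / real (k + m))) = (\<lambda>k. -1 * \<beta> k)"
  proof (rule ext)
    fix k
    have "real (k + m) \<noteq> 0" using m by simp
    then show "- real (k + m) * (\<beta> k / real (k + m)) = -1 * \<beta> k" by (simp add: field_simps)
  qed
  ultimately show ?thesis
    using eseries_has_derivative[of "\<lambda>k. \<beta> k / real (k + m)" m u] eseries_cmult[OF \<beta>, of "-1" m u]
    by simp
qed

lemma eseries_borel: "entire_coeffs \<beta> \<Longrightarrow> eseries \<beta> m \<in> borel_measurable borel"
  by (intro borel_measurable_continuous_onI continuous_at_imp_continuous_on ballI
      DERIV_isCont[OF eseries_has_derivative])

lemma eseries_tendsto_zero: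
  assumes \<beta>: "entire_coeffs \<beta>" and m: "1 \<le> m"
  shows "(eseries \<beta> m \<longlongrightarrow> 0) at_top"
proof (rule Lim_null_comparison)
  let ?B = "\<Sum>k. \<bar>\<beta> k\<bar> * 1 ^ k"
  have sB: "summable (\<lambda>k. \<bar>\<beta> k\<bar> * 1 ^ k)" by (rule entire_coeffs_summable[OF \<beta>]) simp
  have "norm (eseries \<beta> m u) \<le> exp (- (real m * u)) * ?B" if u: "0 \<le> u" for u
  proof -
    have "norm (eseries \<beta> m u) \<le> (\<Sum>k. \<bar>\<beta> k * exp (- (real (k + m) * u))\<bar>)"
      unfolding eseries_def using eseries_summable_abs[OF \<beta>] by (simp add: summable_rabs)
    also have "\<dots> \<le> (\<Sum>k. exp (- (real m * u)) * (\<bar>\<beta> k\<bar> * 1 ^ k))"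
    proof (intro suminf_le summable_mult eseries_summable_abs[OF \<beta>] sB)
      fix k
      have "exp (- (real (k + m) * u)) \<le> exp (- (real m * u))" using u by (simp add: algebra_simps)
      then show "\<bar>\<beta> k * exp (- (real (k + m) * u))\<bar> \<le> exp (- (real m * u)) * (\<bar>\<beta> k\<bar> * 1 ^ k)"
        by (simp add: abs_mult mult_left_mono mult.commute)
    qed
    also have "\<dots> = exp (- (real m * u)) * ?B" by (rule suminf_mult[OF sB])
    finally show ?thesis .
  qed
  then show "\<forall>\<^sub>F u in at_top. norm (eseries \<beta> m u) \<le> exp (- (real m * u)) * ?B"
    unfolding eventually_at_top_linorder by blast
  have "filterlim (\<lambda>u. real m * u) at_top at_top"
    using m by (intro filterlim_tendsto_pos_mult_at_top[OF tendsto_const]) (auto simp: filterlim_ident)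
  then have "((\<lambda>u. exp (- (real m * u))) \<longlongrightarrow> 0) at_top"
    by (intro filterlim_compose[OF exp_at_bot]) (simp add: filterlim_uminus_at_top)
  then show "((\<lambda>u. exp (- (real m * u)) * ?B) \<longlongrightarrow> 0) at_top"
    by (rule tendsto_mult_left_zero)
qed

section \<open>Bessel coefficients\<close>

text \<open>J_nu (2 y) = y ^ nu * sum_k bessel_coeff nu k * (y^2) ^ k.\<close>
definition bessel_coeff :: "nat \<Rightarrow> nat \<Rightarrow> real" where
  "bessel_coeff \<nu> k = (-1) ^ k / (fact k * fact (k + \<nu>))"

lemma abs_bessel_coeff: "\<bar>bessel_coeff \<nu> k\<bar> = 1 / (fact k * fact (k + \<nu>))"
  by (simp add: bessel_coeff_def abs_mult)

lemma abs_bessel_coeff_le: "\<bar>bessel_coeff \<nu> k\<bar> \<le> 1 / fact k"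
proof -
  have "fact k * 1 \<le> (fact k :: real) * fact (k + \<nu>)" by (intro mult_left_mono) auto
  then show ?thesis unfolding abs_bessel_coeff by (intro divide_left_mono) auto
qed

lemma entire_bessel_coeff: "entire_coeffs (bessel_coeff \<nu>)"
  by (rule entire_coeffs_factorial_bound[OF abs_bessel_coeff_le])

lemma bessel_coeff_2_0: "bessel_coeff 2 0 = 1 / 2"
  by (simp add: bessel_coeff_def)

text \<open>The recurrence linking consecutive orders; it makes the tail series an
  antiderivative of the density series.\<close>
lemma bessel_coeff_weight: "real (k + \<nu> + 1) * bessel_coeff (Suc \<nu>) k = bessel_coeff \<nu> k"
proof -
  have "(fact (k + Suc \<nu>) :: real) = real (k + \<nu> + 1) * fact (k + \<nu>)" by simp
  then show ?thesis unfolding bessel_coeff_def by (simp del: fact_Suc of_nat_add add: of_nat_add[symmetric])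
qed

lemma bessel_coeff_2_Suc:
  "bessel_coeff 2 (Suc k) = - bessel_coeff 2 k / ((real k + 1) * (real k + 3))"
proof -
  have "(fact (Suc k + 2) :: real) = (real k + 3) * fact (k + 2)" by (simp add: algebra_simps)
  then show ?thesis by (simp add: bessel_coeff_def field_simps)
qed

lemma bessel_series_lower_bound:
  assumes q: "0 \<le> q" "q \<le> 1"
  shows "1 / fact \<nu> - q / fact (Suc \<nu>) \<le> (\<Sum>k. bessel_coeff \<nu> k * q ^ k)"
    and "0 \<le> 1 / fact \<nu> - q / fact (Suc \<nu>)"
proof -
  define a where "a k = q ^ k / (fact k * fact (k + \<nu>))" for k
  have a_eq: "bessel_coeff \<nu> k * q ^ k = (-1) ^ k * a k" for k
    unfolding a_def bessel_coeff_def by simp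
  have a_abs: "a k = \<bar>bessel_coeff \<nu> k\<bar> * q ^ k" for k
    unfolding a_def abs_bessel_coeff by simp
  have pos: "0 \<le> a k" for k unfolding a_def using q by simp
  have mono: "a (Suc k) \<le> a k" for k
  proof -
    have "q ^ Suc k \<le> q ^ k" using q by (intro power_decreasing) auto
    moreover have "fact k * fact (k + \<nu>) \<le> (fact (Suc k) * fact (Suc k + \<nu>) :: real)"
      by (intro mult_mono fact_mono) auto
    ultimately show ?thesis unfolding a_def using q by (intro frac_le) auto
  qed
  have a0: "a \<longlonglongrightarrow> 0"
    unfolding a_abs using entire_coeffs_summable[OF entire_bessel_coeff q(1)]
    by (rule summable_LIMSEQ_zero)
  have "(\<Sum>i<2 * 1. (-1) ^ i * a i) \<le> (\<Sum>i. (-1) ^ i * a i)"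
    by (rule summable_Leibniz'(2)[OF a0 pos mono])
  moreover have "(\<Sum>i<2 * 1. (-1) ^ i * a i) = 1 / fact \<nu> - q / fact (Suc \<nu>)"
    by (simp add: a_def numeral_2_eq_2)
  ultimately show "1 / fact \<nu> - q / fact (Suc \<nu>) \<le> (\<Sum>k. bessel_coeff \<nu> k * q ^ k)"
    by (simp only: a_eq)
  have "q / fact (Suc \<nu>) \<le> 1 / fact \<nu>"
  proof (rule frac_le)
    show "(fact \<nu> :: real) \<le> fact (Suc \<nu>)" by (rule fact_mono) simp
  qed (use q in auto)
  then show "0 \<le> 1 / fact \<nu> - q / fact (Suc \<nu>)" by simp
qed

lemma eseries_bessel_nonneg:
  assumes "0 \<le> u"
  shows "0 \<le> eseries (bessel_coeff \<nu>) m u"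
proof -
  have q: "0 \<le> exp (- u)" "exp (- u) \<le> 1" using assms by auto
  from bessel_series_lower_bound[OF q, of \<nu>] have "0 \<le> (\<Sum>k. bessel_coeff \<nu> k * exp (- u) ^ k)"
    by linarith
  then show ?thesis unfolding eseries_power_series[OF entire_bessel_coeff] by simp
qed

lemma bessel_J_power_series: "bessel_J \<nu> (2 * y) = y ^ \<nu> * (\<Sum>k. bessel_coeff \<nu> k * (y\<^sup>2) ^ k)"
proof -
  have "y ^ (2 * k + \<nu>) = y ^ \<nu> * (y\<^sup>2) ^ k" for k
    by (simp add: power_add power_mult[symmetric] mult.commute)
  then have "(\<lambda>k. (-1) ^ k / (fact k * fact (k + \<nu>)) * (2 * y / 2) ^ (2 * k + \<nu>)) =
      (\<lambda>k. y ^ \<nu> * (bessel_coeff \<nu> k * (y\<^sup>2) ^ k))"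
    by (auto simp: bessel_coeff_def)
  then show ?thesis
    unfolding bessel_J_def by (simp only: suminf_mult[OF entire_coeffs_power_summable[OF entire_bessel_coeff]])
qed

lemma bessel_J_2_2: "bessel_J 2 2 = (\<Sum>k. bessel_coeff 2 k)"
  using bessel_J_power_series[of 2 1] by simp

lemma bessel_J_2_2_pos: "0 < bessel_J 2 2"
  using bessel_series_lower_bound(1)[of 1 2] unfolding bessel_J_2_2 by (simp add: numeral_3_eq_3)

section \<open>The density and its tail\<close>

text \<open>radial_rho is the density on [0, \<infinity>) and tail u its integral over [u, \<infinity>).\<close>
definition norm_const :: real where
  "norm_const = 1 / (2 * bessel_J 2 2)"

definition radial_rho :: "real \<Rightarrow> real" where
  "radial_rho u = norm_const * eseries (bessel_coeff 1) 2 u"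

definition tail :: "real \<Rightarrow> real" where
  "tail u = norm_const * eseries (bessel_coeff 2) 2 u"

lemma norm_const_pos: "0 < norm_const"
  unfolding norm_const_def using bessel_J_2_2_pos by simp

lemma norm_const_sum: "norm_const * (\<Sum>k. bessel_coeff 2 k) = 1 / 2"
  unfolding norm_const_def bessel_J_2_2[symmetric] using bessel_J_2_2_pos by simp

lemma rho_inf_radial: "rho_inf d = radial_rho \<bar>d\<bar>"
proof -
  define y where "y = exp (- (1 / 2) * \<bar>d\<bar>)"
  have y2: "y\<^sup>2 = exp (- \<bar>d\<bar>)" unfolding y_def by (simp add: power2_eq_square exp_add[symmetric])
  have "exp (- (3 / 2) * \<bar>d\<bar>) * y = exp (- (real 2 * \<bar>d\<bar>))"
    unfolding y_def by (simp add: exp_add[symmetric])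
  then show ?thesis
    unfolding rho_inf_def radial_rho_def norm_const_def eseries_power_series[OF entire_bessel_coeff]
      y_def[symmetric] bessel_J_power_series y2
    by (simp add: mult.assoc)
qed

lemma radial_rho_nonneg: "0 \<le> u \<Longrightarrow> 0 \<le> radial_rho u"
  unfolding radial_rho_def using norm_const_pos eseries_bessel_nonneg by simp

lemma radial_rho_borel[measurable]: "radial_rho \<in> borel_measurable borel"
  unfolding radial_rho_def using eseries_borel[OF entire_bessel_coeff] by measurable

lemma tail_borel[measurable]: "tail \<in> borel_measurable borel"
  unfolding tail_def using eseries_borel[OF entire_bessel_coeff] by measurable

lemma tail_has_derivative: "(tail has_real_derivative - radial_rho u) (at u)"
proof -
  have "(\<lambda>k. - real (k + 2) * bessel_coeff 2 k) = (\<lambda>k. -1 * bessel_coeff 1 k)"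
  proof (rule ext)
    fix k
    have "real (k + 2) * bessel_coeff 2 k = bessel_coeff 1 k"
      using bessel_coeff_weight[of k 1] by (simp add: numeral_2_eq_2)
    then show "- real (k + 2) * bessel_coeff 2 k = -1 * bessel_coeff 1 k"
      by (metis minus_mult_left mult_minus1)
  qed
  then have "(eseries (bessel_coeff 2) 2 has_real_derivative - eseries (bessel_coeff 1) 2 u) (at u)"
    using eseries_has_derivative[OF entire_bessel_coeff[of 2], of 2 u]
      eseries_cmult[OF entire_bessel_coeff[of 1], of "-1" 2 u] by simp
  from DERIV_cmult[OF this, of norm_const] show ?thesis
    unfolding tail_def[abs_def] radial_rho_def by simp
qed

lemma tail_tendsto_zero: "(tail \<longlongrightarrow> 0) at_top"
  unfolding tail_def[abs_def]
  using tendsto_mult_right_zero[OF eseries_tendsto_zero[OF entire_bessel_coeff, of 2]] by simp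

lemma tail_zero: "tail 0 = 1 / 2"
  unfolding tail_def eseries_at_zero by (rule norm_const_sum)

lemma tail_antimono: "0 \<le> a \<Longrightarrow> a \<le> b \<Longrightarrow> tail b \<le> tail a"
  by (rule DERIV_nonpos_imp_nonincreasing) (use tail_has_derivative radial_rho_nonneg in fastforce)+

lemma tail_nonneg: "0 \<le> a \<Longrightarrow> 0 \<le> tail a"
  by (rule tendsto_upperbound[OF tail_tendsto_zero _ trivial_limit_at_top_linorder])
     (auto simp: eventually_at_top_linorder intro: tail_antimono)

lemma tail_le_half: "0 \<le> a \<Longrightarrow> tail a \<le> 1 / 2"
  using tail_antimono[of 0 a] tail_zero by simp

lemma tail_le_one: "0 \<le> a \<Longrightarrow> tail a \<le> 1"
  using tail_le_half[of a] by simp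

section \<open>Integration on the real line\<close>

lemma nn_integral_FTC_Ici:
  fixes f F :: "real \<Rightarrow> real"
  assumes f: "f \<in> borel_measurable borel"
    and F: "\<And>x. a \<le> x \<Longrightarrow> (F has_real_derivative f x) (at x)"
    and nonneg: "\<And>x. a \<le> x \<Longrightarrow> 0 \<le> f x"
    and lim: "(F \<longlongrightarrow> T) at_top"
  shows "(\<integral>\<^sup>+x. ennreal (f x) * indicator {a..} x \<partial>lborel) = ennreal (T - F a)"
    and "F a \<le> T"
proof -
  show "(\<integral>\<^sup>+x. ennreal (f x) * indicator {a..} x \<partial>lborel) = ennreal (T - F a)"
    using nn_integral_FTC_atLeast[OF f F nonneg lim] by simp
  have "F a \<le> F b" if "a \<le> b" for b
    by (rule DERIV_nonneg_imp_nondecreasing[OF that]) (use F nonneg in fastforce)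
  then show "F a \<le> T"
    by (intro tendsto_lowerbound[OF lim _ trivial_limit_at_top_linorder])
       (auto simp: eventually_at_top_linorder)
qed

lemma nn_integral_FTC_Icc:
  fixes f F :: "real \<Rightarrow> real"
  assumes ab: "a \<le> b"
    and F: "\<And>x. a \<le> x \<Longrightarrow> x \<le> b \<Longrightarrow> (F has_real_derivative f x) (at x)"
    and nonneg: "\<And>x. a \<le> x \<Longrightarrow> x \<le> b \<Longrightarrow> 0 \<le> f x"
  shows "(\<integral>\<^sup>+x. ennreal (f x) * indicator {a..b} x \<partial>lborel) = ennreal (F b - F a)"
    and "F a \<le> F b"
proof -
  have "(f has_integral F b - F a) {a..b}"
  proof (rule fundamental_theorem_of_calculus[OF ab])
    show "(F has_vector_derivative f x) (at x within {a..b})" if "x \<in> {a..b}" for x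
      using F that by (auto simp: has_real_derivative_iff_has_vector_derivative[symmetric] intro: DERIV_subset)
  qed
  from nn_integral_has_integral_lebesgue[OF _ this] nonneg
  have "(\<integral>\<^sup>+x. ennreal (indicator {a..b} x * f x) \<partial>lborel) = ennreal (F b - F a)" by auto
  moreover have "ennreal (f x) * indicator {a..b} x = ennreal (indicator {a..b} x * f x)" for x
    by (simp split: split_indicator)
  ultimately show "(\<integral>\<^sup>+x. ennreal (f x) * indicator {a..b} x \<partial>lborel) = ennreal (F b - F a)"
    by simp
  show "F a \<le> F b"
    by (rule DERIV_nonneg_imp_nondecreasing[OF ab]) (use F nonneg in fastforce)
qed

lemma nn_integral_lborel_reflect:
  fixes f :: "real \<Rightarrow> ennreal"
  assumes "f \<in> borel_measurable borel"
  shows "(\<integral>\<^sup>+x. f x \<partial>lborel) = (\<integral>\<^sup>+x. f (- x) \<partial>lborel)"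
  using nn_integral_real_affine[OF assms, of "-1" 0] by simp

lemma nn_integral_lborel_translate:
  fixes f :: "real \<Rightarrow> ennreal"
  assumes "f \<in> borel_measurable borel"
  shows "(\<integral>\<^sup>+x. f x \<partial>lborel) = (\<integral>\<^sup>+x. f (t + x) \<partial>lborel)"
  using nn_integral_real_affine[OF assms, of 1 t] by simp

lemma nn_integral_lborel_indicator_point:
  assumes "\<And>x. x \<noteq> a \<Longrightarrow> x \<in> A \<longleftrightarrow> x \<in> B"
  shows "(\<integral>\<^sup>+x. f x * indicator A x \<partial>lborel) = (\<integral>\<^sup>+x. f x * indicator B x \<partial>lborel)"
  using AE_lborel_singleton[of a] assms
  by (intro nn_integral_cong_AE) (auto elim!: eventually_mono split: split_indicator)

lemma nn_integral_scaled_piece: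
  fixes f g :: "real \<Rightarrow> real"
  assumes "g \<in> borel_measurable borel" "A \<in> sets borel" "0 \<le> c"
    and "\<And>u. u \<in> A \<Longrightarrow> f u = c * g u" "\<And>u. u \<in> A \<Longrightarrow> 0 \<le> g u"
  shows "(\<integral>\<^sup>+u. ennreal (f u) * indicator A u \<partial>lborel) =
    ennreal c * (\<integral>\<^sup>+u. ennreal (g u) * indicator A u \<partial>lborel)"
proof -
  have "(\<integral>\<^sup>+u. ennreal (f u) * indicator A u \<partial>lborel) =
      (\<integral>\<^sup>+u. ennreal c * (ennreal (g u) * indicator A u) \<partial>lborel)"
    using assms(3-5) by (intro nn_integral_cong) (auto simp: ennreal_mult split: split_indicator)
  also have "\<dots> = ennreal c * (\<integral>\<^sup>+u. ennreal (g u) * indicator A u \<partial>lborel)"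
    using assms(1,2) by (intro nn_integral_cmult borel_measurable_times_ennreal) auto
  finally show ?thesis .
qed

section \<open>Explicit integrals of the tail\<close>

lemma nn_integral_radial_rho_Ici:
  assumes t: "0 \<le> t"
  shows "(\<integral>\<^sup>+u. ennreal (radial_rho u) * indicator {t..} u \<partial>lborel) = ennreal (tail t)"
  using nn_integral_FTC_Ici(1)[OF radial_rho_borel, of t "\<lambda>u. - tail u" 0]
    DERIV_minus[OF tail_has_derivative] radial_rho_nonneg tendsto_minus[OF tail_tendsto_zero] t
  by simp

text \<open>Dividing the coefficients of the tail by k + m gives antiderivatives of
  exponentially damped versions of the tail.\<close>
definition shifted_coeff :: "nat \<Rightarrow> nat \<Rightarrow> real" where
  "shifted_coeff m k = bessel_coeff 2 k / real (k + m)"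

lemma entire_shifted_coeff: "1 \<le> m \<Longrightarrow> entire_coeffs (shifted_coeff m)"
  unfolding shifted_coeff_def using entire_coeffs_divide[OF entire_bessel_coeff, of "real m" 2]
  by simp

lemma shifted_coeff_has_derivative:
  "1 \<le> m \<Longrightarrow> (eseries (shifted_coeff m) m has_real_derivative - eseries (bessel_coeff 2) m u) (at u)"
  unfolding shifted_coeff_def[abs_def] by (rule eseries_antiderivative[OF entire_bessel_coeff])

lemma shifted_coeff_diff: "shifted_coeff 1 k - shifted_coeff 3 k = -2 * bessel_coeff 2 (Suc k)"
  unfolding shifted_coeff_def bessel_coeff_2_Suc by (simp add: field_simps)

lemma eseries_shifted_coeff_diff:
  "eseries (shifted_coeff 1) m u - eseries (shifted_coeff 3) m u =
     -2 * eseries (\<lambda>k. bessel_coeff 2 (Suc k)) m u"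
proof -
  have "eseries (\<lambda>k. shifted_coeff 1 k + -1 * shifted_coeff 3 k) m u =
      eseries (shifted_coeff 1) m u + eseries (\<lambda>k. -1 * shifted_coeff 3 k) m u"
    by (rule eseries_add[OF entire_shifted_coeff entire_coeffs_cmult[OF entire_shifted_coeff]]) simp_all
  also have "eseries (\<lambda>k. -1 * shifted_coeff 3 k) m u = -1 * eseries (shifted_coeff 3) m u"
    by (rule eseries_cmult[OF entire_shifted_coeff]) simp
  finally have "eseries (\<lambda>k. shifted_coeff 1 k + -1 * shifted_coeff 3 k) m u =
      eseries (shifted_coeff 1) m u + -1 * eseries (shifted_coeff 3) m u" .
  moreover have "(\<lambda>k. shifted_coeff 1 k + -1 * shifted_coeff 3 k) = (\<lambda>k. -2 * bessel_coeff 2 (Suc k))"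
    using shifted_coeff_diff by (simp add: fun_eq_iff)
  ultimately show ?thesis
    using eseries_cmult[OF entire_coeffs_shift[OF entire_bessel_coeff[of 2]], of "-2" m u] by simp
qed

lemma tail_exp_antiderivative:
  "((\<lambda>v. - (norm_const * eseries (shifted_coeff 3) 3 v)) has_real_derivative tail u * exp (- u)) (at u)"
  using DERIV_minus[OF DERIV_cmult[OF shifted_coeff_has_derivative[of 3 u]], of norm_const]
  by (simp add: tail_def eseries_3[OF entire_bessel_coeff] mult_ac)

text \<open>Integral of tail v * exp (- v) over [0, \<infinity>).\<close>
definition left_mass :: real where
  "left_mass = norm_const * (\<Sum>k. shifted_coeff 3 k)"

lemma nn_integral_tail_exp:
  "(\<integral>\<^sup>+v. ennreal (tail v * exp (- v)) * indicator {0..} v \<partial>lborel) = ennreal left_mass"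
  and left_mass_nonneg: "0 \<le> left_mass"
proof -
  have f: "(\<lambda>v. tail v * exp (- v)) \<in> borel_measurable borel" by measurable
  have lim: "((\<lambda>v. - (norm_const * eseries (shifted_coeff 3) 3 v)) \<longlongrightarrow> 0) at_top"
    using tendsto_minus[OF tendsto_mult_right_zero[OF eseries_tendsto_zero[OF entire_shifted_coeff]]]
    by simp
  note FTC = nn_integral_FTC_Ici[where a = 0, OF f tail_exp_antiderivative _ lim]
  show "(\<integral>\<^sup>+v. ennreal (tail v * exp (- v)) * indicator {0..} v \<partial>lborel) = ennreal left_mass"
    using FTC(1) tail_nonneg by (simp add: eseries_at_zero left_mass_def)
  show "0 \<le> left_mass"
    using FTC(2) tail_nonneg by (simp add: eseries_at_zero left_mass_def)
qed

text \<open>Antiderivative of (1 - tail u) * exp (u - t) in u.\<close>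
definition mid_antideriv :: "real \<Rightarrow> real \<Rightarrow> real" where
  "mid_antideriv t u = exp (u - t) + norm_const * exp (- t) * eseries (shifted_coeff 1) 1 u"

lemma nn_integral_mid:
  assumes t: "0 \<le> t"
  shows "(\<integral>\<^sup>+u. ennreal ((1 - tail u) * exp (u - t)) * indicator {0..t} u \<partial>lborel) =
      ennreal (mid_antideriv t t - mid_antideriv t 0)"
    and "mid_antideriv t 0 \<le> mid_antideriv t t"
proof -
  have F: "(mid_antideriv t has_real_derivative (1 - tail x) * exp (x - t)) (at x)" for x
  proof -
    have "(mid_antideriv t has_real_derivative
        exp (x - t) * (1 - 0) + norm_const * exp (- t) * - eseries (bessel_coeff 2) 1 x) (at x)"
      unfolding mid_antideriv_def[abs_def]
      by (intro DERIV_add DERIV_cmult shifted_coeff_has_derivative DERIV_chain2[OF DERIV_exp]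
          DERIV_diff DERIV_ident DERIV_const) simp
    moreover have "exp (- t) = exp (x - t) * exp (- x)" by (simp add: exp_add[symmetric])
    ultimately show ?thesis
      by (simp add: tail_def eseries_2[OF entire_bessel_coeff] algebra_simps)
  qed
  have nonneg: "0 \<le> (1 - tail x) * exp (x - t)" if "0 \<le> x" for x
    using tail_le_half[OF that] by simp
  show "(\<integral>\<^sup>+u. ennreal ((1 - tail u) * exp (u - t)) * indicator {0..t} u \<partial>lborel) =
      ennreal (mid_antideriv t t - mid_antideriv t 0)"
    and "mid_antideriv t 0 \<le> mid_antideriv t t"
    using nn_integral_FTC_Icc[OF t F nonneg] by auto
qed

lemma nn_integral_right:
  assumes t: "0 \<le> t"
  shows "(\<integral>\<^sup>+u. ennreal ((1 - tail u) * exp (t - u)) * indicator {t..} u \<partial>lborel) =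
      ennreal (1 - norm_const * exp t * eseries (shifted_coeff 3) 3 t)"
    and "norm_const * exp t * eseries (shifted_coeff 3) 3 t \<le> 1"
proof -
  define H where "H u = exp t * (- exp (- u) + norm_const * eseries (shifted_coeff 3) 3 u)" for u
  have F: "(H has_real_derivative (1 - tail x) * exp (t - x)) (at x)" for x
  proof -
    have "(H has_real_derivative
        exp t * (- (exp (- x) * - 1) + norm_const * - eseries (bessel_coeff 2) 3 x)) (at x)"
      unfolding H_def[abs_def]
      by (intro DERIV_add DERIV_cmult shifted_coeff_has_derivative DERIV_minus
          DERIV_chain2[OF DERIV_exp] DERIV_ident) simp
    moreover have "exp (t - x) = exp t * exp (- x)" by (simp add: exp_add[symmetric])
    ultimately show ?thesis
      by (simp add: tail_def eseries_3[OF entire_bessel_coeff] algebra_simps)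
  qed
  have nonneg: "0 \<le> (1 - tail x) * exp (t - x)" if "t \<le> x" for x
    using tail_le_half[of x] that t by simp
  have "((\<lambda>u. - exp (- u) + norm_const * eseries (shifted_coeff 3) 3 u) \<longlongrightarrow> - 0 + norm_const * 0) at_top"
    by (intro tendsto_intros eseries_tendsto_zero[OF entire_shifted_coeff]
        filterlim_compose[OF exp_at_bot filterlim_uminus_at_bot_at_top]) auto
  then have lim: "(H \<longlongrightarrow> 0) at_top"
    unfolding H_def using tendsto_mult_right_zero by fastforce
  have Ht: "H t = - 1 + norm_const * exp t * eseries (shifted_coeff 3) 3 t"
    unfolding H_def by (simp add: algebra_simps exp_minus_inverse)
  have f: "(\<lambda>u. (1 - tail u) * exp (t - u)) \<in> borel_measurable borel" by measurable
  show "(\<integral>\<^sup>+u. ennreal ((1 - tail u) * exp (t - u)) * indicator {t..} u \<partial>lborel) =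
      ennreal (1 - norm_const * exp t * eseries (shifted_coeff 3) 3 t)"
    and "norm_const * exp t * eseries (shifted_coeff 3) 3 t \<le> 1"
    using nn_integral_FTC_Ici[where a = t, OF f F nonneg lim] unfolding Ht by auto
qed

section \<open>The candidate stationary law\<close>

abbreviation stat_law :: "real measure" where
  "stat_law \<equiv> density lborel (\<lambda>d. ennreal (rho_inf d))"

definition stat_cdf :: "real \<Rightarrow> real" where
  "stat_cdf u = (if u < 0 then tail (- u) else 1 - tail u)"

lemma rho_inf_borel[measurable]: "rho_inf \<in> borel_measurable borel"
  unfolding rho_inf_radial[abs_def] using radial_rho_borel by measurable

lemma rho_inf_even: "rho_inf (- d) = rho_inf d"
  unfolding rho_inf_radial by simp

lemma nn_integral_rho_inf_Ici:
  assumes "0 \<le> s"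
  shows "(\<integral>\<^sup>+v. ennreal (rho_inf v) * indicator {s..} v \<partial>lborel) = ennreal (tail s)"
proof -
  have "(\<integral>\<^sup>+v. ennreal (rho_inf v) * indicator {s..} v \<partial>lborel) =
      (\<integral>\<^sup>+v. ennreal (radial_rho v) * indicator {s..} v \<partial>lborel)"
    using assms by (intro nn_integral_cong) (auto simp: rho_inf_radial split: split_indicator)
  also have "\<dots> = ennreal (tail s)" by (rule nn_integral_radial_rho_Ici[OF assms])
  finally show ?thesis .
qed

lemma nn_integral_rho_inf_Iic:
  assumes "0 \<le> s"
  shows "(\<integral>\<^sup>+v. ennreal (rho_inf v) * indicator {..-s} v \<partial>lborel) = ennreal (tail s)"
proof -
  have "(\<integral>\<^sup>+v. ennreal (rho_inf v) * indicator {..-s} v \<partial>lborel) =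
      (\<integral>\<^sup>+v. ennreal (rho_inf (- v)) * indicator {..-s} (- v) \<partial>lborel)"
    by (rule nn_integral_lborel_reflect) measurable
  also have "\<dots> = (\<integral>\<^sup>+v. ennreal (rho_inf v) * indicator {s..} v \<partial>lborel)"
    by (intro nn_integral_cong) (auto simp: rho_inf_even split: split_indicator)
  finally show ?thesis using nn_integral_rho_inf_Ici[OF assms] by simp
qed

lemma nn_integral_rho_inf_Iio_0:
  "(\<integral>\<^sup>+v. ennreal (rho_inf v) * indicator {..<0} v \<partial>lborel) = ennreal (1 / 2)"
proof -
  have "(\<integral>\<^sup>+v. ennreal (rho_inf v) * indicator {..<0} v \<partial>lborel) =
      (\<integral>\<^sup>+v. ennreal (rho_inf v) * indicator {..-0} v \<partial>lborel)"
    by (rule nn_integral_lborel_indicator_point[of 0]) auto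
  then show ?thesis using nn_integral_rho_inf_Iic[of 0] tail_zero by simp
qed

lemma nn_integral_rho_inf_Icc:
  assumes t: "0 \<le> t"
  shows "(\<integral>\<^sup>+v. ennreal (rho_inf v) * indicator {0..t} v \<partial>lborel) = ennreal (1 / 2 - tail t)"
proof -
  have "(\<integral>\<^sup>+v. ennreal (rho_inf v) * indicator {0..t} v \<partial>lborel) =
      (\<integral>\<^sup>+v. ennreal (radial_rho v) * indicator {0..t} v \<partial>lborel)"
    by (intro nn_integral_cong) (auto simp: rho_inf_radial split: split_indicator)
  also have "\<dots> = ennreal (- tail t - - tail 0)"
    using DERIV_minus[OF tail_has_derivative] radial_rho_nonneg
    by (intro nn_integral_FTC_Icc(1)[OF t]) auto
  finally show ?thesis by (simp add: tail_zero)
qed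

lemma emeasure_stat_law:
  "A \<in> sets borel \<Longrightarrow> emeasure stat_law A = (\<integral>\<^sup>+x. ennreal (rho_inf x) * indicator A x \<partial>lborel)"
  by (subst emeasure_density) auto

lemma emeasure_stat_law_split:
  assumes "B \<subseteq> {0..}" "B \<in> sets borel"
  shows "emeasure stat_law ({..<0} \<union> B) = ennreal (1 / 2) + (\<integral>\<^sup>+x. ennreal (rho_inf x) * indicator B x \<partial>lborel)"
proof -
  have "emeasure stat_law ({..<0} \<union> B) =
      (\<integral>\<^sup>+x. ennreal (rho_inf x) * indicator {..<0} x + ennreal (rho_inf x) * indicator B x \<partial>lborel)"
    using assms by (subst emeasure_stat_law) (auto intro!: nn_integral_cong split: split_indicator)
  then show ?thesis
    using assms(2) by (simp add: nn_integral_add nn_integral_rho_inf_Iio_0)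
qed

lemma real_distribution_stat_law: "real_distribution stat_law"
proof -
  have "UNIV = {..<0} \<union> {0::real..}" by auto
  then have "emeasure stat_law UNIV = emeasure stat_law ({..<0} \<union> {0..})" by simp
  also have "\<dots> = ennreal (1 / 2) + ennreal (1 / 2)"
    by (simp add: emeasure_stat_law_split nn_integral_rho_inf_Ici tail_zero)
  also have "\<dots> = 1" by (subst ennreal_plus[symmetric]) auto
  finally have "prob_space stat_law" by (intro prob_spaceI) simp
  then show ?thesis by (simp add: real_distribution_def real_distribution_axioms_def)
qed

lemma emeasure_stat_law_Iic: "emeasure stat_law {..t} = ennreal (stat_cdf t)"
proof (cases "t < 0")
  case True
  then show ?thesis
    using emeasure_stat_law[of "{..- (- t)}"] nn_integral_rho_inf_Iic[of "- t"]
    by (simp add: stat_cdf_def)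
next
  case False
  then have "{..t} = {..<0} \<union> {0..t}" by auto
  then have "emeasure stat_law {..t} = ennreal (1 / 2) + ennreal (1 / 2 - tail t)"
    using False by (simp add: emeasure_stat_law_split nn_integral_rho_inf_Icc)
  also have "\<dots> = ennreal (1 - tail t)"
    using tail_le_half[of t] False by (subst ennreal_plus[symmetric]) auto
  finally show ?thesis using False by (simp add: stat_cdf_def)
qed

lemma stat_cdf_reflect: "stat_cdf (- u) = 1 - stat_cdf u"
  by (auto simp: stat_cdf_def tail_zero)

lemma stat_cdf_range: "0 \<le> stat_cdf u" "stat_cdf u \<le> 1"
  unfolding stat_cdf_def using tail_nonneg[of "- u"] tail_le_half[of "- u"]
    tail_nonneg[of u] tail_le_half[of u] by auto

lemma cdf_stat_law: "cdf stat_law t = stat_cdf t"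
proof -
  interpret real_distribution stat_law by (rule real_distribution_stat_law)
  show ?thesis
    using emeasure_stat_law_Iic[of t] stat_cdf_range[of t] by (simp add: cdf_def2 emeasure_eq_measure)
qed

lemma stat_cdf_borel[measurable]: "stat_cdf \<in> borel_measurable borel"
  unfolding stat_cdf_def[abs_def] by measurable

section \<open>The standard exponential distribution\<close>

lemma prob_space_std_exp: "prob_space std_exp"
  unfolding std_exp_def by (rule prob_space_exponential_density) simp

lemma sets_std_exp[measurable_cong, simp]: "sets std_exp = sets borel"
  unfolding std_exp_def by simp

lemma space_std_exp[simp]: "space std_exp = UNIV"
  using sets_eq_imp_space_eq[OF sets_std_exp] by simp

lemma nn_integral_std_exp:
  "f \<in> borel_measurable borel \<Longrightarrow>
     (\<integral>\<^sup>+x. f x \<partial>std_exp) = (\<integral>\<^sup>+x. ennreal (exponential_density 1 x) * f x \<partial>lborel)"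
  unfolding std_exp_def by (subst nn_integral_density) auto

lemma emeasure_std_exp_Iic: "0 \<le> a \<Longrightarrow> emeasure std_exp {..a} = ennreal (1 - exp (- a))"
  unfolding std_exp_def by (simp add: emeasure_erlang_density erlang_CDF_0)

lemma std_exp_negative_null: "{..<0} \<in> null_sets std_exp"
proof -
  have "emeasure std_exp {..<0} \<le> emeasure std_exp {..0}" by (intro emeasure_mono) auto
  then show ?thesis using emeasure_std_exp_Iic[of 0] by (simp add: null_sets_def)
qed

lemma emeasure_std_exp_Ioi:
  assumes a: "0 \<le> a"
  shows "emeasure std_exp {a<..} = ennreal (exp (- a))"
proof -
  interpret prob_space std_exp by (rule prob_space_std_exp)
  have "prob {a<..} = 1 - prob {..a}"
    using prob_compl[of "{..a}"] by (simp add: Compl_eq_Diff_UNIV[symmetric] not_le)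
  moreover have "prob {..a} = 1 - exp (- a)"
    using emeasure_std_exp_Iic[OF a] a by (simp add: emeasure_eq_measure)
  ultimately show ?thesis by (simp add: emeasure_eq_measure)
qed

lemma emeasure_std_exp_Ici:
  assumes a: "0 \<le> a"
  shows "emeasure std_exp {a..} = ennreal (exp (- a))"
proof -
  have "(\<integral>\<^sup>+x. ennreal (exponential_density 1 x) * indicator {a..} x \<partial>lborel) =
      (\<integral>\<^sup>+x. ennreal (exponential_density 1 x) * indicator {a<..} x \<partial>lborel)"
    by (rule nn_integral_lborel_indicator_point[of a]) auto
  then have "emeasure std_exp {a..} = emeasure std_exp {a<..}"
    by (simp add: std_exp_def emeasure_density)
  then show ?thesis using emeasure_std_exp_Ioi[OF a] by simp
qed

text \<open>The density of X - Y for independent standard exponential X and Y is the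
  Laplace density exp (- abs s) / 2.\<close>
lemma exp_density_autocorrelation:
  "(\<integral>\<^sup>+x. ennreal (exponential_density 1 x) * ennreal (exponential_density 1 (x - s)) \<partial>lborel)
     = ennreal (exp (- \<bar>s\<bar>) / 2)"
proof -
  define m where "m = max 0 s"
  have "(\<integral>\<^sup>+x. ennreal (exponential_density 1 x) * ennreal (exponential_density 1 (x - s)) \<partial>lborel)
      = (\<integral>\<^sup>+x. ennreal (exp s * exp (- 2 * x)) * indicator {m..} x \<partial>lborel)"
    unfolding m_def
    by (intro nn_integral_cong)
       (auto simp: exponential_density_def ennreal_mult'[symmetric] exp_add[symmetric] split: split_indicator)
  also have "\<dots> = ennreal (0 - (- (exp s * exp (- 2 * m) / 2)))"
  proof (rule nn_integral_FTC_Ici(1))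
    show "((\<lambda>x. - (exp s * exp (- 2 * x) / 2)) has_real_derivative exp s * exp (- 2 * x)) (at x)" for x
      by (auto intro!: derivative_eq_intros)
    have "filterlim (\<lambda>x::real. 2 * x) at_top at_top"
      by (intro filterlim_tendsto_pos_mult_at_top[OF tendsto_const]) (auto simp: filterlim_ident)
    then have "((\<lambda>x::real. exp (- (2 * x))) \<longlongrightarrow> 0) at_top"
      by (intro filterlim_compose[OF exp_at_bot]) (simp add: filterlim_uminus_at_top)
    then show "((\<lambda>x. - (exp s * exp (- 2 * x) / 2)) \<longlongrightarrow> 0) at_top"
      using tendsto_minus[OF tendsto_divide_zero[OF tendsto_mult_right_zero, of _ _ "exp s" 2]] by simp
  qed auto
  also have "exp s * exp (- 2 * m) = exp (- \<bar>s\<bar>)"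
    unfolding m_def by (auto simp: exp_add[symmetric] max_def abs_if)
  finally show ?thesis by simp
qed

lemma nn_integral_std_exp_difference:
  fixes f :: "real \<Rightarrow> ennreal"
  assumes [measurable]: "f \<in> borel_measurable borel"
  shows "(\<integral>\<^sup>+x. \<integral>\<^sup>+y. f (x - y) \<partial>std_exp \<partial>std_exp) =
    (\<integral>\<^sup>+s. f s * ennreal (exp (- \<bar>s\<bar>) / 2) \<partial>lborel)"
proof -
  let ?e = "\<lambda>x. ennreal (exponential_density 1 x)"
  have [measurable]: "(\<lambda>x. exponential_density 1 x) \<in> borel_measurable borel"
    unfolding exponential_density_def[abs_def] by measurable
  have "(\<integral>\<^sup>+x. \<integral>\<^sup>+y. f (x - y) \<partial>std_exp \<partial>std_exp) =
      (\<integral>\<^sup>+x. ?e x * (\<integral>\<^sup>+y. ?e y * f (x - y) \<partial>lborel) \<partial>lborel)"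
    by (simp add: nn_integral_std_exp)
  also have "\<dots> = (\<integral>\<^sup>+x. ?e x * (\<integral>\<^sup>+s. ?e (x - s) * f s \<partial>lborel) \<partial>lborel)"
    using nn_integral_real_affine[of "\<lambda>y. ?e y * f (x - y)" "-1" x for x] by simp
  also have "\<dots> = (\<integral>\<^sup>+x. \<integral>\<^sup>+s. ?e x * ?e (x - s) * f s \<partial>lborel \<partial>lborel)"
    by (simp add: nn_integral_cmult[symmetric] mult.assoc)
  also have "\<dots> = (\<integral>\<^sup>+s. \<integral>\<^sup>+x. ?e x * ?e (x - s) * f s \<partial>lborel \<partial>lborel)"
    by (rule lborel_pair.Fubini'[symmetric]) measurable
  also have "\<dots> = (\<integral>\<^sup>+s. f s * (\<integral>\<^sup>+x. ?e x * ?e (x - s) \<partial>lborel) \<partial>lborel)"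
    by (simp add: nn_integral_cmult[symmetric] ac_simps)
  also have "\<dots> = (\<integral>\<^sup>+s. f s * ennreal (exp (- \<bar>s\<bar>) / 2) \<partial>lborel)"
    by (simp add: exp_density_autocorrelation)
  finally show ?thesis .
qed

section \<open>One step of the ladder chain\<close>

lemma ladder_stationary_iff:
  "ladder_stationary \<mu> \<longleftrightarrow> real_distribution \<mu> \<and> ladder_transition \<mu> = \<mu>"
  by (auto simp: ladder_stationary_def real_distribution_def real_distribution_axioms_def)

lemma ladder_step_clamp: "0 \<le> z \<Longrightarrow> ladder_step d x y z = max (- z) (min z (d + y - x))"
  unfolding ladder_step_def by (simp add: min_def max_def)

lemma ladder_step_borel[measurable]:
  "(\<lambda>(d, x, y, z). ladder_step d x y z) \<in> borel_measurable (borel \<Otimes>\<^sub>M (borel \<Otimes>\<^sub>M (borel \<Otimes>\<^sub>M borel)))"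
  unfolding ladder_step_def by measurable

lemma cdf_borel[measurable]: "real_distribution \<mu> \<Longrightarrow> cdf \<mu> \<in> borel_measurable borel"
  by (rule borel_measurable_mono)
     (use finite_borel_measure.cdf_nondecreasing[OF real_distribution.finite_borel_measure_M] in \<open>auto simp: mono_def\<close>)

lemma cdf_range: "real_distribution \<mu> \<Longrightarrow> 0 \<le> cdf \<mu> t \<and> cdf \<mu> t \<le> 1"
  using real_distribution.cdf_bounded_prob finite_borel_measure.cdf_nonneg[OF real_distribution.finite_borel_measure_M]
  by blast

text \<open>Probability, over the previous state, that the next state is at most t when the
  edge weights are x, y and z.\<close>
definition step_cdf :: "real measure \<Rightarrow> real \<Rightarrow> real \<Rightarrow> real \<Rightarrow> real \<Rightarrow> real" where
  "step_cdf \<mu> t x y z =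
    (if 0 \<le> t then (if z \<le> t then 1 else cdf \<mu> (t + x - y))
     else (if - t \<le> z then cdf \<mu> (t + x - y) else 0))"

lemma emeasure_ladder_step_le:
  assumes "real_distribution \<mu>" "0 \<le> z"
  shows "emeasure \<mu> {d. ladder_step d x y z \<le> t} = ennreal (step_cdf \<mu> t x y z)"
proof -
  interpret real_distribution \<mu> by fact
  have "{d. ladder_step d x y z \<le> t} =
      (if 0 \<le> t then (if z \<le> t then UNIV else {..t + x - y}) else (if - t \<le> z then {..t + x - y} else {}))"
    using assms(2) unfolding ladder_step_clamp[OF assms(2)] by (auto simp: max_def min_def)
  then show ?thesis by (simp add: step_cdf_def cdf_def2 emeasure_eq_measure prob_space[simplified])
qed

lemma step_cdf_borel[measurable]:
  "real_distribution \<mu> \<Longrightarrow> (\<lambda>(x, y, z). ennreal (step_cdf \<mu> t x y z)) \<in> borel_measurable (borel \<Otimes>\<^sub>M (borel \<Otimes>\<^sub>M borel))"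
  unfolding step_cdf_def by measurable

abbreviation std_exp3 :: "(real \<times> real \<times> real) measure" where
  "std_exp3 \<equiv> std_exp \<Otimes>\<^sub>M (std_exp \<Otimes>\<^sub>M std_exp)"

lemma prob_space_std_exp3: "prob_space std_exp3"
  by (intro prob_space_pair prob_space_std_exp)

text \<open>Conditioning on the edge weights (Tonelli), the probability that the next state is
  at most t is the average of step_cdf; the event of a negative rung weight is null.\<close>
lemma emeasure_transition_Iic:
  assumes \<mu>: "real_distribution \<mu>"
  shows "emeasure (ladder_transition \<mu>) {..t} =
    (\<integral>\<^sup>+x. \<integral>\<^sup>+y. \<integral>\<^sup>+z. ennreal (step_cdf \<mu> t x y z) \<partial>std_exp \<partial>std_exp \<partial>std_exp)"
proof -
  interpret M: real_distribution \<mu> by (rule \<mu>)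
  interpret E: prob_space std_exp by (rule prob_space_std_exp)
  interpret E2: prob_space "std_exp \<Otimes>\<^sub>M std_exp" by (intro prob_space_pair prob_space_std_exp)
  interpret R: prob_space std_exp3 by (rule prob_space_std_exp3)
  interpret MR: pair_sigma_finite \<mu> std_exp3
    by (simp add: pair_sigma_finite_def M.sigma_finite_measure_axioms R.sigma_finite_measure_axioms)
  let ?f = "\<lambda>(d, x, y, z). ladder_step d x y z"
  let ?A = "?f -` {..t} \<inter> space (\<mu> \<Otimes>\<^sub>M std_exp3)"
  let ?g = "\<lambda>(x, y, z). ennreal (step_cdf \<mu> t x y z)"
  have f: "?f \<in> measurable (\<mu> \<Otimes>\<^sub>M std_exp3) borel" by measurable
  then have A: "?A \<in> sets (\<mu> \<Otimes>\<^sub>M std_exp3)" by measurable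
  have null: "UNIV \<times> UNIV \<times> {..<0} \<in> null_sets std_exp3"
    by (intro E2.times_in_null_sets2 E.times_in_null_sets2 std_exp_negative_null) simp_all
  have slice: "emeasure \<mu> ((\<lambda>d. (d, r)) -` ?A) = ?g r" if rung: "r \<notin> UNIV \<times> UNIV \<times> {..<0}" for r
  proof -
    obtain x y z where r: "r = (x, y, z)" and z: "0 \<le> z" using rung by (cases r) auto
    have "(\<lambda>d. (d, r)) -` ?A = {d. ladder_step d x y z \<le> t}" by (auto simp: r space_pair_measure)
    then show ?thesis using emeasure_ladder_step_le[OF \<mu> z] by (simp add: r)
  qed
  have "emeasure (ladder_transition \<mu>) {..t} = emeasure (\<mu> \<Otimes>\<^sub>M std_exp3) ?A"
    unfolding ladder_transition_def by (rule emeasure_distr[OF f]) simp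
  also have "\<dots> = (\<integral>\<^sup>+r. emeasure \<mu> ((\<lambda>d. (d, r)) -` ?A) \<partial>std_exp3)"
    by (rule MR.emeasure_pair_measure_alt2[OF A])
  also have "\<dots> = (\<integral>\<^sup>+r. ?g r \<partial>std_exp3)"
    by (intro nn_integral_cong_AE eventually_mono[OF AE_not_in[OF null] slice])
  also have "\<dots> = (\<integral>\<^sup>+x. \<integral>\<^sup>+p. ?g (x, p) \<partial>(std_exp \<Otimes>\<^sub>M std_exp) \<partial>std_exp)"
    by (rule E2.nn_integral_fst[symmetric]) (use \<mu> in measurable)
  also have "\<dots> = (\<integral>\<^sup>+x. \<integral>\<^sup>+y. \<integral>\<^sup>+z. ?g (x, y, z) \<partial>std_exp \<partial>std_exp \<partial>std_exp)"
    by (intro nn_integral_cong E.nn_integral_fst[symmetric]) (use \<mu> in measurable)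
  finally show ?thesis by simp
qed

lemma nn_integral_step_cdf:
  "(\<integral>\<^sup>+z. ennreal (step_cdf \<mu> t x y z) \<partial>std_exp) =
    (if 0 \<le> t then ennreal (1 - exp (- t)) + ennreal (exp (- t)) * ennreal (cdf \<mu> (t + x - y))
     else ennreal (exp t) * ennreal (cdf \<mu> (t + x - y)))"
proof (cases "0 \<le> t")
  case True
  have "(\<integral>\<^sup>+z. ennreal (step_cdf \<mu> t x y z) \<partial>std_exp) =
      (\<integral>\<^sup>+z. indicator {..t} z + ennreal (cdf \<mu> (t + x - y)) * indicator {t<..} z \<partial>std_exp)"
    using True by (intro nn_integral_cong) (auto simp: step_cdf_def split: split_indicator)
  also have "\<dots> = emeasure std_exp {..t} + ennreal (cdf \<mu> (t + x - y)) * emeasure std_exp {t<..}"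
    by (subst nn_integral_add) (auto simp: nn_integral_cmult_indicator)
  finally show ?thesis
    using True by (simp add: emeasure_std_exp_Iic emeasure_std_exp_Ioi mult.commute)
next
  case False
  have "(\<integral>\<^sup>+z. ennreal (step_cdf \<mu> t x y z) \<partial>std_exp) =
      (\<integral>\<^sup>+z. ennreal (cdf \<mu> (t + x - y)) * indicator {- t..} z \<partial>std_exp)"
    using False by (intro nn_integral_cong) (auto simp: step_cdf_def split: split_indicator)
  then show ?thesis
    using False by (simp add: nn_integral_cmult_indicator emeasure_std_exp_Ici, simp add: mult.commute)
qed

abbreviation std_exp2 :: "(real \<times> real) measure" where
  "std_exp2 \<equiv> std_exp \<Otimes>\<^sub>M std_exp"

lemma prob_space_std_exp2: "prob_space std_exp2"
  by (intro prob_space_pair prob_space_std_exp)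

lemma integrable_std_exp2_bounded:
  fixes g :: "real \<times> real \<Rightarrow> real"
  assumes "g \<in> borel_measurable std_exp2" "\<And>p. \<bar>g p\<bar> \<le> B"
  shows "integrable std_exp2 g"
proof -
  interpret prob_space std_exp2 by (rule prob_space_std_exp2)
  show ?thesis using assms by (intro integrable_const_bound[where B = B]) auto
qed

definition smoothed_cdf :: "real measure \<Rightarrow> real \<Rightarrow> real" where
  "smoothed_cdf \<mu> t = (\<integral>p. cdf \<mu> (t + fst p - snd p) \<partial>std_exp2)"

lemma integrable_smoothed_cdf:
  assumes "real_distribution \<mu>"
  shows "integrable std_exp2 (\<lambda>p. cdf \<mu> (t + fst p - snd p))"
  using assms cdf_range[OF assms] by (intro integrable_std_exp2_bounded[where B = 1]) auto

lemma smoothed_cdf_range: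
  assumes "real_distribution \<mu>"
  shows "0 \<le> smoothed_cdf \<mu> t" "smoothed_cdf \<mu> t \<le> 1"
proof -
  interpret prob_space std_exp2 by (rule prob_space_std_exp2)
  show "0 \<le> smoothed_cdf \<mu> t" unfolding smoothed_cdf_def
    using cdf_range[OF assms] by (intro integral_nonneg_AE) auto
  show "smoothed_cdf \<mu> t \<le> 1" unfolding smoothed_cdf_def
    using integral_le_const[OF integrable_smoothed_cdf[OF assms], where c = 1] cdf_range[OF assms] by auto
qed

lemma nn_integral_smoothed_cdf:
  assumes \<mu>: "real_distribution \<mu>"
  shows "(\<integral>\<^sup>+x. \<integral>\<^sup>+y. ennreal (cdf \<mu> (t + x - y)) \<partial>std_exp \<partial>std_exp) = ennreal (smoothed_cdf \<mu> t)"
proof -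
  interpret E: prob_space std_exp by (rule prob_space_std_exp)
  have "(\<integral>\<^sup>+x. \<integral>\<^sup>+y. ennreal (cdf \<mu> (t + x - y)) \<partial>std_exp \<partial>std_exp) =
      (\<integral>\<^sup>+p. ennreal (cdf \<mu> (t + fst p - snd p)) \<partial>std_exp2)"
    using E.nn_integral_fst[of "\<lambda>p. ennreal (cdf \<mu> (t + fst p - snd p))"] \<mu> by simp
  also have "\<dots> = ennreal (smoothed_cdf \<mu> t)"
    unfolding smoothed_cdf_def using cdf_range[OF \<mu>]
    by (intro nn_integral_eq_integral integrable_smoothed_cdf[OF \<mu>]) auto
  finally show ?thesis .
qed

text \<open>The cdf after one step, as a function of the point t and of the smoothed cdf k at t.\<close>
definition clamp_cdf :: "real \<Rightarrow> real \<Rightarrow> real" where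
  "clamp_cdf t k = (if 0 \<le> t then 1 - exp (- t) + exp (- t) * k else exp t * k)"

lemma clamp_cdf_nonneg: "0 \<le> k \<Longrightarrow> 0 \<le> clamp_cdf t k"
  unfolding clamp_cdf_def by (simp add: add_nonneg_nonneg)

lemma real_distribution_transition:
  assumes "real_distribution \<mu>"
  shows "real_distribution (ladder_transition \<mu>)"
proof -
  interpret real_distribution \<mu> by fact
  have "prob_space (\<mu> \<Otimes>\<^sub>M std_exp3)"
    by (intro prob_space_pair prob_space_std_exp3 prob_space_axioms)
  then show ?thesis
    unfolding ladder_transition_def real_distribution_def real_distribution_axioms_def
    by (auto intro!: prob_space.prob_space_distr)
qed

lemma cdf_transition:
  assumes \<mu>: "real_distribution \<mu>"
  shows "cdf (ladder_transition \<mu>) t = clamp_cdf t (smoothed_cdf \<mu> t)"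
proof -
  interpret E: prob_space std_exp by (rule prob_space_std_exp)
  interpret T: real_distribution "ladder_transition \<mu>" by (rule real_distribution_transition[OF \<mu>])
  have k: "0 \<le> smoothed_cdf \<mu> t" by (rule smoothed_cdf_range[OF \<mu>])
  have E1: "emeasure std_exp UNIV = 1" using E.emeasure_space_1 by simp
  have "emeasure (ladder_transition \<mu>) {..t} = ennreal (clamp_cdf t (smoothed_cdf \<mu> t))"
  proof (cases "0 \<le> t")
    case True
    have "emeasure (ladder_transition \<mu>) {..t} = (\<integral>\<^sup>+x. \<integral>\<^sup>+y.
        ennreal (1 - exp (- t)) + ennreal (exp (- t)) * ennreal (cdf \<mu> (t + x - y)) \<partial>std_exp \<partial>std_exp)"
      unfolding emeasure_transition_Iic[OF \<mu>] nn_integral_step_cdf using True by simp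
    also have "\<dots> = ennreal (1 - exp (- t)) + ennreal (exp (- t)) * ennreal (smoothed_cdf \<mu> t)"
      using \<mu> by (simp add: nn_integral_add nn_integral_cmult E1 nn_integral_smoothed_cdf[OF \<mu>, symmetric])
    finally show ?thesis
      using True k by (simp add: clamp_cdf_def ennreal_mult[symmetric] ennreal_plus[symmetric] del: ennreal_plus)
  next
    case False
    have "emeasure (ladder_transition \<mu>) {..t} = (\<integral>\<^sup>+x. \<integral>\<^sup>+y.
        ennreal (exp t) * ennreal (cdf \<mu> (t + x - y)) \<partial>std_exp \<partial>std_exp)"
      unfolding emeasure_transition_Iic[OF \<mu>] nn_integral_step_cdf using False by simp
    also have "\<dots> = ennreal (exp t) * ennreal (smoothed_cdf \<mu> t)"
      using \<mu> by (simp add: nn_integral_cmult nn_integral_smoothed_cdf[OF \<mu>, symmetric])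
    finally show ?thesis
      using False k by (simp add: clamp_cdf_def ennreal_mult[symmetric])
  qed
  then show ?thesis
    using clamp_cdf_nonneg[OF k] by (simp add: cdf_def2 T.emeasure_eq_measure)
qed

section \<open>Uniqueness\<close>

lemma clamp_cdf_diff: "clamp_cdf t k1 - clamp_cdf t k2 = exp (- \<bar>t\<bar>) * (k1 - k2)"
  unfolding clamp_cdf_def by (simp add: algebra_simps)

definition contraction_const :: real where
  "contraction_const = 1 - (1 - exp (- 1)) ^ 2 * exp (- 3)"

lemma contraction_const_bounds: "0 < contraction_const" "contraction_const < 1" "exp (- 1) \<le> contraction_const"
proof -
  have a: "0 < exp (- 1 :: real)" "exp (- 1 :: real) < 1" and b: "0 < exp (- 3 :: real)" "exp (- 3 :: real) < 1"
    by auto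
  have "(1 - exp (- 1 :: real)) * exp (- 3) \<le> 1" using a b by (intro mult_le_one) auto
  then have "(1 - exp (- 1 :: real)) * ((1 - exp (- 1)) * exp (- 3)) \<le> 1 - exp (- 1)"
    using a mult_left_mono[of _ 1 "1 - exp (- 1 :: real)"] by simp
  then have le: "(1 - exp (- 1 :: real)) ^ 2 * exp (- 3) \<le> 1 - exp (- 1)"
    by (simp add: power2_eq_square mult.assoc)
  have pos: "0 < (1 - exp (- 1 :: real)) ^ 2 * exp (- 3)" using a b by simp
  show "0 < contraction_const" "contraction_const < 1" "exp (- 1) \<le> contraction_const"
    unfolding contraction_const_def using le pos a by linarith+
qed

lemma measure_std_exp2_box: "measure std_exp2 ({3<..} \<times> {..1}) = exp (- 3) * (1 - exp (- 1))"
proof -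
  interpret E: prob_space std_exp by (rule prob_space_std_exp)
  interpret P: prob_space std_exp2 by (rule prob_space_std_exp2)
  have "emeasure std_exp2 ({3<..} \<times> {..1}) = emeasure std_exp {3<..} * emeasure std_exp {..1}"
    by (rule E.emeasure_pair_measure_Times) auto
  then show ?thesis
    by (simp add: emeasure_std_exp_Ioi emeasure_std_exp_Iic ennreal_mult[symmetric] P.emeasure_eq_measure)
qed

text \<open>The key estimate: exp (- abs t) * E exp (- abs (t + X - Y)) is bounded away from 1.
  For abs t \<ge> 1 the first factor does it; otherwise the event X > 3, Y \<le> 1 forces
  abs (t + X - Y) \<ge> 1.\<close>
lemma damping_bound: "exp (- \<bar>t\<bar>) * (\<integral>p. exp (- \<bar>t + fst p - snd p\<bar>) \<partial>std_exp2) \<le> contraction_const"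
proof -
  interpret P: prob_space std_exp2 by (rule prob_space_std_exp2)
  let ?g = "\<lambda>p. exp (- \<bar>t + fst p - snd p\<bar>)"
  have gi: "integrable std_exp2 ?g" by (rule integrable_std_exp2_bounded[where B = 1]) auto
  have g1: "(\<integral>p. ?g p \<partial>std_exp2) \<le> 1" using P.integral_le_const[OF gi, where c = 1] by auto
  have g0: "0 \<le> (\<integral>p. ?g p \<partial>std_exp2)" by (rule integral_nonneg_AE) auto
  show ?thesis
  proof (cases "1 \<le> \<bar>t\<bar>")
    case True
    then have "exp (- \<bar>t\<bar>) * (\<integral>p. ?g p \<partial>std_exp2) \<le> exp (- 1) * 1"
      using g0 g1 by (intro mult_mono) auto
    then show ?thesis using contraction_const_bounds(3) by simp
  next
    case False
    let ?A = "{3<..} \<times> {..1::real}"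
    let ?k = "1 - exp (- 1 :: real)"
    have A: "?A \<in> sets std_exp2" by measurable
    have le: "?g p \<le> 1 - ?k * indicator ?A p" for p
    proof (cases "p \<in> ?A")
      case True
      then have "1 \<le> \<bar>t + fst p - snd p\<bar>" using False by (auto simp: mem_Times_iff)
      then show ?thesis using True by simp
    qed simp
    have iA: "integrable std_exp2 (indicator ?A :: _ \<Rightarrow> real)"
      using A by (intro integrable_std_exp2_bounded[where B = 1]) (auto split: split_indicator)
    have "(\<integral>p. ?g p \<partial>std_exp2) \<le> (\<integral>p. 1 - ?k * indicator ?A p \<partial>std_exp2)"
      using A le by (intro integral_mono[OF gi] integrable_std_exp2_bounded[where B = 1])
        (auto simp: indicator_def)
    also have "\<dots> = 1 - ?k * measure std_exp2 ?A"
      using A iA by (subst Bochner_Integration.integral_diff) (auto simp: P.prob_space)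
    also have "\<dots> = contraction_const"
      unfolding measure_std_exp2_box contraction_const_def by (simp add: power2_eq_square)
    finally show ?thesis using mult_right_mono[OF _ g0, of "exp (- \<bar>t\<bar>)" 1] by simp
  qed
qed

lemma damped_average_step:
  fixes h :: "real \<Rightarrow> real"
  assumes [measurable]: "h \<in> borel_measurable borel"
    and bounded: "\<And>t. \<bar>h t\<bar> \<le> 1"
    and dominated: "\<And>t. \<bar>h t\<bar> \<le> exp (- \<bar>t\<bar>) * (\<integral>p. \<bar>h (t + fst p - snd p)\<bar> \<partial>std_exp2)"
    and bound: "\<And>t. \<bar>h t\<bar> \<le> c"
  shows "\<bar>h t\<bar> \<le> c * contraction_const"
proof -
  interpret P: prob_space std_exp2 by (rule prob_space_std_exp2)
  have c: "0 \<le> c" using bound[of 0] by simp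
  have int: "integrable std_exp2 (\<lambda>p. \<bar>h (t + fst p - snd p)\<bar>)" for t
    using bounded by (intro integrable_std_exp2_bounded[where B = 1]) auto
  have decay: "\<bar>h u\<bar> \<le> c * exp (- \<bar>u\<bar>)" for u
  proof -
    have "(\<integral>p. \<bar>h (u + fst p - snd p)\<bar> \<partial>std_exp2) \<le> c"
      using P.integral_le_const[OF int[of u], where c = c] bound by auto
    then have "exp (- \<bar>u\<bar>) * (\<integral>p. \<bar>h (u + fst p - snd p)\<bar> \<partial>std_exp2) \<le> exp (- \<bar>u\<bar>) * c"
      by (rule mult_left_mono) simp
    from order_trans[OF dominated[of u] this] show ?thesis by (simp only: mult.commute)
  qed
  have "(\<integral>p. \<bar>h (t + fst p - snd p)\<bar> \<partial>std_exp2) \<le> (\<integral>p. c * exp (- \<bar>t + fst p - snd p\<bar>) \<partial>std_exp2)"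
    using decay by (intro integral_mono[OF int] integrable_mult_right integrable_std_exp2_bounded[where B = 1]) auto
  also have "\<dots> = c * (\<integral>p. exp (- \<bar>t + fst p - snd p\<bar>) \<partial>std_exp2)" by simp
  finally have "exp (- \<bar>t\<bar>) * (\<integral>p. \<bar>h (t + fst p - snd p)\<bar> \<partial>std_exp2) \<le>
      exp (- \<bar>t\<bar>) * (c * (\<integral>p. exp (- \<bar>t + fst p - snd p\<bar>) \<partial>std_exp2))"
    by (rule mult_left_mono) simp
  also have "\<dots> = c * (exp (- \<bar>t\<bar>) * (\<integral>p. exp (- \<bar>t + fst p - snd p\<bar>) \<partial>std_exp2))"
    by (simp only: mult.left_commute)
  also have "\<dots> \<le> c * contraction_const"
    using damping_bound[of t] c by (rule mult_left_mono)
  finally show ?thesis using dominated[of t] by linarith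
qed

text \<open>A bounded function dominated by its own damped average vanishes: iterating
  the previous lemma gives the bound contraction_const ^ n for every n.\<close>
lemma damped_average_zero:
  fixes h :: "real \<Rightarrow> real"
  assumes h: "h \<in> borel_measurable borel"
    and bounded: "\<And>t. \<bar>h t\<bar> \<le> 1"
    and dominated: "\<And>t. \<bar>h t\<bar> \<le> exp (- \<bar>t\<bar>) * (\<integral>p. \<bar>h (t + fst p - snd p)\<bar> \<partial>std_exp2)"
  shows "h t = 0"
proof -
  have "\<forall>t. \<bar>h t\<bar> \<le> contraction_const ^ n" for n
  proof (induction n)
    case 0
    then show ?case using bounded by simp
  next
    case (Suc n)
    then show ?case
      using damped_average_step[OF h bounded dominated, of "contraction_const ^ n"] by (simp add: mult.commute)
  qed
  moreover have "(\<lambda>n. contraction_const ^ n) \<longlonglongrightarrow> 0"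
    using contraction_const_bounds by (intro LIMSEQ_realpow_zero) auto
  ultimately have "\<bar>h t\<bar> \<le> 0"
    by (intro tendsto_lowerbound[where F = sequentially]) (auto simp: eventually_sequentially)
  then show ?thesis by simp
qed

lemma stationary_cdf_eq: "ladder_stationary \<mu> \<Longrightarrow> cdf \<mu> t = clamp_cdf t (smoothed_cdf \<mu> t)"
  using cdf_transition[of \<mu> t] by (simp add: ladder_stationary_iff)

theorem ladder_stationary_unique:
  assumes s1: "ladder_stationary \<mu>1" and s2: "ladder_stationary \<mu>2"
  shows "\<mu>1 = \<mu>2"
proof -
  have d1: "real_distribution \<mu>1" and d2: "real_distribution \<mu>2"
    using s1 s2 by (auto simp: ladder_stationary_iff)
  define h where "h t = cdf \<mu>1 t - cdf \<mu>2 t" for t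
  have "h t = 0" for t
  proof (rule damped_average_zero[where h = h])
    show "h \<in> borel_measurable borel" unfolding h_def[abs_def] using d1 d2 by measurable
    show "\<bar>h t\<bar> \<le> 1" for t unfolding h_def using cdf_range[OF d1, of t] cdf_range[OF d2, of t] by auto
    fix t
    have "smoothed_cdf \<mu>1 t - smoothed_cdf \<mu>2 t = (\<integral>p. h (t + fst p - snd p) \<partial>std_exp2)"
      unfolding smoothed_cdf_def h_def using integrable_smoothed_cdf[OF d1] integrable_smoothed_cdf[OF d2] by simp
    then have "\<bar>smoothed_cdf \<mu>1 t - smoothed_cdf \<mu>2 t\<bar> \<le> (\<integral>p. \<bar>h (t + fst p - snd p)\<bar> \<partial>std_exp2)"
      by (simp add: integral_abs_bound)
    moreover have "\<bar>h t\<bar> = exp (- \<bar>t\<bar>) * \<bar>smoothed_cdf \<mu>1 t - smoothed_cdf \<mu>2 t\<bar>"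
      unfolding h_def stationary_cdf_eq[OF s1] stationary_cdf_eq[OF s2] clamp_cdf_diff by (simp add: abs_mult)
    ultimately show "\<bar>h t\<bar> \<le> exp (- \<bar>t\<bar>) * (\<integral>p. \<bar>h (t + fst p - snd p)\<bar> \<partial>std_exp2)"
      by (simp add: mult_left_mono)
  qed
  then show ?thesis using cdf_unique[OF d1 d2] by (auto simp: h_def fun_eq_iff)
qed

section \<open>Existence\<close>

lemma smoothed_cdf_stat_law:
  "ennreal (smoothed_cdf stat_law t) =
     (\<integral>\<^sup>+u. ennreal (stat_cdf u * exp (- \<bar>u - t\<bar>) / 2) \<partial>lborel)"
proof -
  have "ennreal (smoothed_cdf stat_law t) =
      (\<integral>\<^sup>+x. \<integral>\<^sup>+y. ennreal (stat_cdf (t + (x - y))) \<partial>std_exp \<partial>std_exp)"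
    unfolding nn_integral_smoothed_cdf[OF real_distribution_stat_law, symmetric] cdf_stat_law
    by (simp add: add_diff_eq)
  also have "\<dots> = (\<integral>\<^sup>+s. ennreal (stat_cdf (t + s)) * ennreal (exp (- \<bar>s\<bar>) / 2) \<partial>lborel)"
    by (rule nn_integral_std_exp_difference[where f = "\<lambda>s. ennreal (stat_cdf (t + s))"]) measurable
  also have "\<dots> = (\<integral>\<^sup>+u. ennreal (stat_cdf (t + (- t + u))) * ennreal (exp (- \<bar>- t + u\<bar>) / 2) \<partial>lborel)"
    by (rule nn_integral_lborel_translate) measurable
  finally show ?thesis using stat_cdf_range by (simp add: ennreal_mult'[symmetric])
qed

lemma smoothed_piece_left:
  assumes t: "0 \<le> t"
  shows "(\<integral>\<^sup>+u. ennreal (stat_cdf u * exp (- \<bar>u - t\<bar>) / 2) * indicator {..<0} u \<partial>lborel) =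
    ennreal (exp (- t) / 2 * left_mass)"
proof -
  have g: "(\<lambda>u. tail (- u) * exp u) \<in> borel_measurable borel" by measurable
  have "(\<integral>\<^sup>+u. ennreal (stat_cdf u * exp (- \<bar>u - t\<bar>) / 2) * indicator {..<0} u \<partial>lborel) =
      ennreal (exp (- t) / 2) * (\<integral>\<^sup>+u. ennreal (tail (- u) * exp u) * indicator {..<0} u \<partial>lborel)"
    using t tail_nonneg
    by (intro nn_integral_scaled_piece[OF g, simplified]) (auto simp: stat_cdf_def exp_diff exp_minus field_simps)
  also have "(\<integral>\<^sup>+u. ennreal (tail (- u) * exp u) * indicator {..<0} u \<partial>lborel) =
      (\<integral>\<^sup>+v. ennreal (tail (- (- v)) * exp (- v)) * indicator {..<0} (- v) \<partial>lborel)"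
    by (intro nn_integral_lborel_reflect) measurable
  also have "\<dots> = (\<integral>\<^sup>+v. ennreal (tail v * exp (- v)) * indicator {0<..} v \<partial>lborel)"
    by (intro nn_integral_cong) (simp split: split_indicator)
  also have "\<dots> = (\<integral>\<^sup>+v. ennreal (tail v * exp (- v)) * indicator {0..} v \<partial>lborel)"
    by (rule nn_integral_lborel_indicator_point[of 0]) auto
  also have "\<dots> = ennreal left_mass"
    by (rule nn_integral_tail_exp)
  finally show ?thesis
    using left_mass_nonneg by (simp add: ennreal_mult[symmetric])
qed

lemma smoothed_piece_mid:
  assumes t: "0 \<le> t"
  shows "(\<integral>\<^sup>+u. ennreal (stat_cdf u * exp (- \<bar>u - t\<bar>) / 2) * indicator {0..t} u \<partial>lborel) =
    ennreal (1 / 2 * (mid_antideriv t t - mid_antideriv t 0))"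
proof -
  have g: "(\<lambda>u. (1 - tail u) * exp (u - t)) \<in> borel_measurable borel" by measurable
  have "(\<integral>\<^sup>+u. ennreal (stat_cdf u * exp (- \<bar>u - t\<bar>) / 2) * indicator {0..t} u \<partial>lborel) =
      ennreal (1 / 2) * ennreal (mid_antideriv t t - mid_antideriv t 0)"
    unfolding nn_integral_mid(1)[OF t, symmetric] using tail_le_one
    by (intro nn_integral_scaled_piece[OF g, simplified]) (auto simp: stat_cdf_def field_simps)
  also have "\<dots> = ennreal (1 / 2 * (mid_antideriv t t - mid_antideriv t 0))"
    by (rule ennreal_mult'[symmetric]) simp
  finally show ?thesis .
qed

lemma smoothed_piece_right:
  assumes t: "0 \<le> t"
  shows "(\<integral>\<^sup>+u. ennreal (stat_cdf u * exp (- \<bar>u - t\<bar>) / 2) * indicator {t<..} u \<partial>lborel) =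
    ennreal (1 / 2 * (1 - norm_const * exp t * eseries (shifted_coeff 3) 3 t))"
proof -
  have g: "(\<lambda>u. (1 - tail u) * exp (t - u)) \<in> borel_measurable borel" by measurable
  have "(\<integral>\<^sup>+u. ennreal (stat_cdf u * exp (- \<bar>u - t\<bar>) / 2) * indicator {t<..} u \<partial>lborel) =
      ennreal (1 / 2) * (\<integral>\<^sup>+u. ennreal ((1 - tail u) * exp (t - u)) * indicator {t<..} u \<partial>lborel)"
    using t tail_le_one by (intro nn_integral_scaled_piece[OF g, simplified]) (auto simp: stat_cdf_def field_simps)
  also have "(\<integral>\<^sup>+u. ennreal ((1 - tail u) * exp (t - u)) * indicator {t<..} u \<partial>lborel) =
      (\<integral>\<^sup>+u. ennreal ((1 - tail u) * exp (t - u)) * indicator {t..} u \<partial>lborel)"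
    by (rule nn_integral_lborel_indicator_point[of t]) auto
  also have "(\<integral>\<^sup>+u. ennreal ((1 - tail u) * exp (t - u)) * indicator {t..} u \<partial>lborel) =
      ennreal (1 - norm_const * exp t * eseries (shifted_coeff 3) 3 t)"
    by (rule nn_integral_right(1)[OF t])
  also have "ennreal (1 / 2) * ennreal (1 - norm_const * exp t * eseries (shifted_coeff 3) 3 t) =
      ennreal (1 / 2 * (1 - norm_const * exp t * eseries (shifted_coeff 3) 3 t))"
    by (rule ennreal_mult'[symmetric]) simp
  finally show ?thesis .
qed

definition smoothed_value :: "real \<Rightarrow> real" where
  "smoothed_value t = exp (- t) / 2 * left_mass + 1 / 2 * (mid_antideriv t t - mid_antideriv t 0)
     + 1 / 2 * (1 - norm_const * exp t * eseries (shifted_coeff 3) 3 t)"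

lemma smoothed_cdf_stat_law_nonneg:
  assumes t: "0 \<le> t"
  shows "smoothed_cdf stat_law t = smoothed_value t"
proof -
  let ?F = "\<lambda>u. ennreal (stat_cdf u * exp (- \<bar>u - t\<bar>) / 2)"
  have nonneg: "0 \<le> exp (- t) / 2 * left_mass" "0 \<le> 1 / 2 * (mid_antideriv t t - mid_antideriv t 0)"
    "0 \<le> 1 / 2 * (1 - norm_const * exp t * eseries (shifted_coeff 3) 3 t)"
    using left_mass_nonneg nn_integral_mid(2)[OF t] nn_integral_right(2)[OF t] by auto
  have "(\<integral>\<^sup>+u. ?F u \<partial>lborel) =
      (\<integral>\<^sup>+u. ?F u * indicator {..<0} u + ?F u * indicator {0..t} u + ?F u * indicator {t<..} u \<partial>lborel)"
    using t by (intro nn_integral_cong) (auto split: split_indicator)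
  also have "\<dots> = ennreal (exp (- t) / 2 * left_mass) + ennreal (1 / 2 * (mid_antideriv t t - mid_antideriv t 0))
      + ennreal (1 / 2 * (1 - norm_const * exp t * eseries (shifted_coeff 3) 3 t))"
    by (simp add: nn_integral_add smoothed_piece_left[OF t] smoothed_piece_mid[OF t] smoothed_piece_right[OF t])
  also have "\<dots> = ennreal (smoothed_value t)"
    using nonneg by (simp add: smoothed_value_def ennreal_plus[symmetric] del: ennreal_plus)
  finally have "ennreal (smoothed_cdf stat_law t) = ennreal (smoothed_value t)"
    by (simp add: smoothed_cdf_stat_law)
  then show ?thesis
    using nonneg smoothed_cdf_range[OF real_distribution_stat_law] by (simp add: smoothed_value_def)
qed

text \<open>The reflection symmetry of stat_cdf transfers to its smoothing; this handles t < 0.\<close>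
lemma smoothed_cdf_stat_law_reflect: "smoothed_cdf stat_law t + smoothed_cdf stat_law (- t) = 1"
proof -
  have "ennreal (smoothed_cdf stat_law (- t)) =
      (\<integral>\<^sup>+u. ennreal (stat_cdf (- u) * exp (- \<bar>- u - - t\<bar>) / 2) \<partial>lborel)"
    unfolding smoothed_cdf_stat_law by (rule nn_integral_lborel_reflect) measurable
  also have "\<dots> = (\<integral>\<^sup>+u. ennreal ((1 - stat_cdf u) * exp (- \<bar>u - t\<bar>) / 2) \<partial>lborel)"
    by (simp add: stat_cdf_reflect abs_minus_commute)
  finally have "ennreal (smoothed_cdf stat_law t) + ennreal (smoothed_cdf stat_law (- t)) =
      (\<integral>\<^sup>+u. ennreal (stat_cdf u * exp (- \<bar>u - t\<bar>) / 2) +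
        ennreal ((1 - stat_cdf u) * exp (- \<bar>u - t\<bar>) / 2) \<partial>lborel)"
    by (simp add: smoothed_cdf_stat_law nn_integral_add)
  also have "\<dots> = (\<integral>\<^sup>+u. ennreal (exp (- \<bar>u - t\<bar>) / 2) \<partial>lborel)"
    using stat_cdf_range
    by (intro nn_integral_cong) (subst ennreal_plus[symmetric]; auto simp: field_simps)
  also have "\<dots> = (\<integral>\<^sup>+s. ennreal (exp (- \<bar>s\<bar>) / 2) \<partial>lborel)"
    by (subst nn_integral_lborel_translate[where t = t]) auto
  also have "\<dots> = (\<integral>\<^sup>+x. \<integral>\<^sup>+y. 1 \<partial>std_exp \<partial>std_exp)"
    using nn_integral_std_exp_difference[of "\<lambda>_. 1"] by simp
  also have "\<dots> = 1"
    using prob_space.emeasure_space_1[OF prob_space_std_exp] by simp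
  finally show ?thesis
    using smoothed_cdf_range[OF real_distribution_stat_law] by (simp flip: ennreal_plus)
qed

text \<open>The fixed-point equation on [0, \<infinity>), reduced to an identity between the explicit
  series (valid for every t).\<close>
lemma stationarity_identity:
  "1 - tail t = 1 - exp (- t) + exp (- t) * smoothed_value t"
proof -
  define q where "q = exp (- t)"
  define C where "C = norm_const"
  define A where "A = eseries (shifted_coeff 1) 2 t"
  define B where "B = eseries (shifted_coeff 3) 2 t"
  define G where "G = eseries (bessel_coeff 2) 2 t"
  define D where "D = eseries (\<lambda>k. bessel_coeff 2 (Suc k)) 2 t"
  define S1 where "S1 = (\<Sum>k. shifted_coeff 1 k)"
  define S3 where "S3 = (\<Sum>k. shifted_coeff 3 k)"
  define S where "S = (\<Sum>k. bessel_coeff 2 k)"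
  define D0 where "D0 = (\<Sum>k. bessel_coeff 2 (Suc k))"
  have pq: "exp t * q = 1" unfolding q_def by (simp add: exp_minus)
  have A1: "A = q * eseries (shifted_coeff 1) 1 t"
    unfolding A_def q_def by (rule eseries_2[OF entire_shifted_coeff]) simp
  have B3: "eseries (shifted_coeff 3) 3 t = q * B"
    unfolding B_def q_def by (rule eseries_3[OF entire_shifted_coeff]) simp
  have AB: "A - B = -2 * D" unfolding A_def B_def D_def by (rule eseries_shifted_coeff_diff)
  have qD: "q * D = G - q * q / 2"
    using eseries_drop_head[OF entire_bessel_coeff[of 2], of t 2]
    unfolding q_def D_def G_def by (simp add: bessel_coeff_2_0 exp_add[symmetric])
  have S13: "S1 - S3 = -2 * D0"
    using eseries_shifted_coeff_diff[of 0 0] unfolding S1_def S3_def D0_def eseries_at_zero .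
  have D0S: "D0 = S - 1 / 2"
    using eseries_drop_head[OF entire_bessel_coeff[of 2], of 0 0]
    unfolding D0_def S_def eseries_at_zero by (simp add: bessel_coeff_2_0)
  have CS: "C * S = 1 / 2" unfolding C_def S_def by (rule norm_const_sum)
  have mid_t: "mid_antideriv t t = 1 + C * q * eseries (shifted_coeff 1) 1 t"
    unfolding mid_antideriv_def C_def q_def by simp
  have mid_0: "mid_antideriv t 0 = q + C * q * S1"
    unfolding mid_antideriv_def C_def q_def S1_def eseries_at_zero by simp
  have "smoothed_value t = q / 2 * (C * S3) + 1 / 2 * (mid_antideriv t t - mid_antideriv t 0)
      + 1 / 2 * (1 - C * exp t * (q * B))"
    unfolding smoothed_value_def left_mass_def B3 C_def q_def S3_def ..
  moreover have "tail t = C * G" unfolding tail_def C_def G_def ..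
  ultimately show ?thesis
    unfolding q_def[symmetric] mid_t mid_0 using pq A1 AB qD S13 D0S CS by algebra
qed

lemma cdf_transition_stat_law: "cdf (ladder_transition stat_law) t = stat_cdf t"
proof (cases "0 \<le> t")
  case True
  have "cdf (ladder_transition stat_law) t = clamp_cdf t (smoothed_value t)"
    using True by (simp add: cdf_transition[OF real_distribution_stat_law] smoothed_cdf_stat_law_nonneg)
  also have "\<dots> = 1 - tail t" using stationarity_identity[of t] True by (simp add: clamp_cdf_def)
  finally show ?thesis using True by (simp add: stat_cdf_def)
next
  case False
  have "smoothed_cdf stat_law t = 1 - smoothed_value (- t)"
    using smoothed_cdf_stat_law_reflect[of t] smoothed_cdf_stat_law_nonneg[of "- t"] False by simp
  then have "cdf (ladder_transition stat_law) t = exp t * (1 - smoothed_value (- t))"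
    using False by (simp add: cdf_transition[OF real_distribution_stat_law] clamp_cdf_def)
  also have "\<dots> = tail (- t)"
    using stationarity_identity[of "- t"] by (simp add: algebra_simps)
  finally show ?thesis using False by (simp add: stat_cdf_def)
qed

theorem stat_law_stationary: "ladder_stationary stat_law"
proof -
  have "ladder_transition stat_law = stat_law"
    using real_distribution_transition[OF real_distribution_stat_law] real_distribution_stat_law
    by (rule cdf_unique) (simp add: fun_eq_iff cdf_transition_stat_law cdf_stat_law)
  then show ?thesis using real_distribution_stat_law by (simp add: ladder_stationary_iff)
qed

theorem mainTheorem8:
  fixes \<mu> :: "real measure"
  shows "ladder_stationary \<mu> \<longleftrightarrow> \<mu> = density lborel (\<lambda>d. ennreal (rho_inf d))"
  using ladder_stationary_unique[of \<mu> stat_law] stat_law_stationary by blast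

end
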